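(* Let $p$ be a prime, $n>1$, and let $C\in\mathbb{L}_p^{n\times n}$ be a matrix in rational canonical form. Then the linear cellular automaton over $(\mathbb{Z}/p\mathbb{Z})^n$ with associated matrix $C$ is positively expansive if and only if $C$ is expansive.
   Context: $\mathbb{L}_p=\mathbb{Z}/p\mathbb{Z}[X,X^{-1}]$. The companion matrix of a monic $\pi(t)=\beta_0+\dots+\beta_{d-1}t^{d-1}+t^d$ is the $d\times d$ matrix with ones on the subdiagonal, last column $(-\beta_0,\dots,-\beta_{d-1})^T$, zeros elsewhere. $C$ is in rational canonical form if it is block diagonal with diagonal blocks the companion matrices $C_{\pi_1},\dots,C_{\pi_s}$ of monic polynomials $\pi_i$ of positive degree with $\pi_i\mid\pi_j$ for $i\le j$. The linear cellular automaton over $(\mathbb{Z}/p\mathbb{Z})^n$ with associated matrix $\sum_{j=-r}^rA_jX^{-j}$ is the map $\mathcal{F}(c)_i=\sum_{j=-r}^rA_jc_{i+j}$ on $((\mathbb{Z}/p\mathbb{Z})^n)^{\mathbb{Z}}$ with metric $d(c,c')=2^{-\min\{|j|:c_j\neq c'_j\}}$ ($d(c,c)=0$); it is positively expansive if there is $\varepsilon>0$ such that for all $c\neq c'$ some $\ell\in\mathbb{N}$ gives $d(\mathcal{F}^\ell(c),\mathcal{F}^\ell(c'))\geq\varepsilon$. For nonzero $\alpha\in\mathbb{L}_p$, $\deg^+(\alpha)$ (resp. $\deg^-(\alpha)$) is the largest (resp. smallest) exponent with nonzero coefficient; $\deg^+(0)=-\infty$, $\deg^-(0)=+\infty$. A monic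 $\beta_0+\beta_1t+\dots+\beta_{n-1}t^{n-1}+t^n\in\mathbb{L}_p[t]$ is expansive if $\beta_0\neq0$, $\deg^+(\beta_0)>0$, $\deg^+(\beta_0)>\deg^+(\beta_i)$ for all $1\le i\le n-1$, $\deg^-(\beta_0)<0$ and $\deg^-(\beta_0)<\deg^-(\beta_i)$ for all $1\le i\le n-1$. A matrix $M$ is expansive if $\det(tI_n-M)$ is expansive. *)

theory Defs
  imports "HOL-Computational_Algebra.Formal_Laurent_Series"
    "HOL-Library.Extended_Real"
    "Jordan_Normal_Form.Char_Poly"
    "Berlekamp_Zassenhaus.Finite_Field"
begin

text \<open>Laurent polynomials over a ring are represented as formal Laurent series
  (type fls) with finitely many nonzero coefficients. With 'p::prime_card,
  the type 'p mod_ring is Z/pZ for the prime p = CARD('p).\<close>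

definition is_lpoly :: "'a::zero fls \<Rightarrow> bool" where
  "is_lpoly f \<longleftrightarrow> finite {k. fls_nth f k \<noteq> 0}"

definition deg_plus :: "'a::zero fls \<Rightarrow> ereal" where
  "deg_plus f = (if f = 0 then -\<infinity> else ereal (real_of_int (Max {k. fls_nth f k \<noteq> 0})))"

definition deg_minus :: "'a::zero fls \<Rightarrow> ereal" where
  "deg_minus f = (if f = 0 then \<infinity> else ereal (real_of_int (fls_subdegree f)))"

definition is_lp_tpoly :: "'a::zero fls poly \<Rightarrow> bool" where
  "is_lp_tpoly P \<longleftrightarrow> (\<forall>i. is_lpoly (Polynomial.coeff P i))"

definition expansive_poly :: "'a::comm_ring_1 fls poly \<Rightarrow> bool" where
  "expansive_poly P \<longleftrightarrow> is_lp_tpoly P \<and> lead_coeff P = 1 \<and>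
     Polynomial.coeff P 0 \<noteq> 0 \<and> deg_plus (Polynomial.coeff P 0) > 0 \<and>
     (\<forall>i\<in>{1..<degree P}. deg_plus (Polynomial.coeff P 0) > deg_plus (Polynomial.coeff P i)) \<and>
     deg_minus (Polynomial.coeff P 0) < 0 \<and>
     (\<forall>i\<in>{1..<degree P}. deg_minus (Polynomial.coeff P 0) < deg_minus (Polynomial.coeff P i))"

text \<open>char_poly M = det (t I - M) (Jordan_Normal_Form).\<close>
definition expansive_mat :: "'a::comm_ring_1 fls mat \<Rightarrow> bool" where
  "expansive_mat M \<longleftrightarrow> expansive_poly (char_poly M)"

definition companion_mat :: "'a::comm_ring_1 poly \<Rightarrow> 'a mat" where
  "companion_mat \<pi> = (let d = degree \<pi> in
     mat d d (\<lambda>(i,j). if j = d - 1 then - Polynomial.coeff \<pi> i else if i = j + 1 then 1 else 0))"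

definition lp_dvd :: "'a::comm_ring_1 fls poly \<Rightarrow> 'a fls poly \<Rightarrow> bool" where
  "lp_dvd a b \<longleftrightarrow> (\<exists>q. is_lp_tpoly q \<and> b = a * q)"

definition rational_canonical_form :: "'a::comm_ring_1 fls mat \<Rightarrow> bool" where
  "rational_canonical_form C \<longleftrightarrow> (\<exists>\<pi>s.
     (\<forall>\<pi>\<in>set \<pi>s. is_lp_tpoly \<pi> \<and> lead_coeff \<pi> = 1 \<and> degree \<pi> > 0) \<and>
     (\<forall>i j. i \<le> j \<and> j < length \<pi>s \<longrightarrow> lp_dvd (\<pi>s ! i) (\<pi>s ! j)) \<and>
     C = diag_block_mat (map companion_mat \<pi>s))"

text \<open>The linear cellular automaton with associated matrix M = sum_j A_j X^(-j):
  F(c)_i = sum_j A_j c_(i+j), where A_j is the coefficient matrix of X^(-j).\<close>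
definition lca :: "nat \<Rightarrow> 'a::comm_ring_1 fls mat \<Rightarrow> (int \<Rightarrow> 'a vec) \<Rightarrow> (int \<Rightarrow> 'a vec)" where
  "lca n M c = (\<lambda>i. vec n (\<lambda>k. \<Sum>l<n. \<Sum>j\<in>{j. fls_nth (M $$ (k,l)) (-j) \<noteq> 0}.
       fls_nth (M $$ (k,l)) (-j) * (c (i + j) $ l)))"

definition config_dist :: "(int \<Rightarrow> 'a) \<Rightarrow> (int \<Rightarrow> 'a) \<Rightarrow> real" where
  "config_dist c c' = (if c = c' then 0
     else (1/2) ^ (LEAST m. \<exists>j. nat \<bar>j\<bar> = m \<and> c j \<noteq> c' j))"

definition pos_expansive_lca :: "nat \<Rightarrow> 'a::comm_ring_1 fls mat \<Rightarrow> bool" where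
  "pos_expansive_lca n M \<longleftrightarrow> (\<exists>\<epsilon>>0. \<forall>c c'.
     (\<forall>i. c i \<in> carrier_vec n) \<longrightarrow> (\<forall>i. c' i \<in> carrier_vec n) \<longrightarrow> c \<noteq> c' \<longrightarrow>
     (\<exists>l::nat. config_dist ((lca n M ^^ l) c) ((lca n M ^^ l) c') \<ge> \<epsilon>))"

end

(*
  Block-diagonal matrices give products of automata, so both sides of the equivalence split over
  the companion blocks of C: a product automaton is positively expansive iff every factor is, and
  char_poly C is the product of the invariant factors. Expansiveness of a product of monic
  polynomials in L_p[t] is read off the initial forms (the polynomials in t collecting the
  coefficients at the extreme X-exponent, in either direction), which are multiplicative: P is
  expansive iff both initial forms are constant.

  For one companion block of pi = beta_0 + ... + beta_(d-1) t^(d-1) + t^d, the last coordinate y of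
  an orbit satisfies the linear recurrence sum_m beta_m y_(l+m) = 0, each beta_m acting on
  sequences over Z by convolution. If pi is expansive, beta_0 alone attains the extreme exponent
  in each direction, so an orbit that vanishes on a window of width 2K vanishes on all of Z. If
  not, some beta_m with m > 0 attains it, and solving the recurrence for that term produces a
  nonzero orbit that vanishes on any prescribed window.
*)

theory Submission
  imports Defs "HOL-Library.Infinite_Set"
begin

section \<open>Bounded Laurent polynomials\<close>

definition lpoly_bounded :: "'a::zero fls \<Rightarrow> nat \<Rightarrow> bool" where
  "lpoly_bounded f N \<longleftrightarrow> (\<forall>n. int N < \<bar>n\<bar> \<longrightarrow> fls_nth f n = 0)"

lemma lpoly_bounded_mono: "lpoly_bounded f N \<Longrightarrow> N \<le> M \<Longrightarrow> lpoly_bounded f M"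
  unfolding lpoly_bounded_def by auto

lemma lpoly_bounded_support: "lpoly_bounded f N \<Longrightarrow> {n. fls_nth f n \<noteq> 0} \<subseteq> {-int N..int N}"
  unfolding lpoly_bounded_def by force

lemma is_lpoly_iff_bounded: "is_lpoly f \<longleftrightarrow> (\<exists>N. lpoly_bounded f N)"
proof
  assume "is_lpoly f"
  then obtain k where k: "abs ` {n. fls_nth f n \<noteq> 0} \<subseteq> {..k}"
    unfolding is_lpoly_def finite_int_iff_bounded_le by blast
  have "lpoly_bounded f (nat k)"
    unfolding lpoly_bounded_def
  proof (intro allI impI)
    fix n :: int assume "int (nat k) < \<bar>n\<bar>"
    then have "\<bar>n\<bar> \<notin> {..k}" by (simp split: if_splits)
    with k show "fls_nth f n = 0" by blast
  qed
  then show "\<exists>N. lpoly_bounded f N" ..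
next
  assume "\<exists>N. lpoly_bounded f N"
  then obtain N where "lpoly_bounded f N" ..
  then show "is_lpoly f"
    unfolding is_lpoly_def by (rule finite_subset[OF lpoly_bounded_support]) simp
qed

lemma fls_times_nth_support:
  fixes f g :: "'a::comm_ring_1 fls"
  assumes "finite S" "{i. fls_nth f i \<noteq> 0} \<subseteq> S"
  shows "fls_nth (f * g) n = (\<Sum>i\<in>S. fls_nth f i * fls_nth g (n - i))"
proof -
  let ?df = "fls_subdegree f" and ?dg = "fls_subdegree g"
  have "fls_nth (f * g) n = (\<Sum>i=?df..n - ?dg. fls_nth f i * fls_nth g (n - i))"
    by (rule fls_times_nth(2))
  also have "\<dots> = (\<Sum>i\<in>{?df..n - ?dg} \<union> S. fls_nth f i * fls_nth g (n - i))"
  proof (rule sum.mono_neutral_left)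
    show "\<forall>i\<in>{?df..n - ?dg} \<union> S - {?df..n - ?dg}. fls_nth f i * fls_nth g (n - i) = 0"
    proof
      fix i assume i: "i \<in> {?df..n - ?dg} \<union> S - {?df..n - ?dg}"
      show "fls_nth f i * fls_nth g (n - i) = 0"
      proof (cases "fls_nth f i = 0")
        case False
        then have "?df \<le> i" by (auto intro: fls_subdegree_leI)
        with i have "n - i < ?dg" by auto
        then show ?thesis by (simp add: nth_less_subdegree_zero)
      qed simp
    qed
  qed (use assms in auto)
  also have "\<dots> = (\<Sum>i\<in>S. fls_nth f i * fls_nth g (n - i))"
    by (rule sum.mono_neutral_right) (use assms in \<open>force simp: subset_iff\<close>)+
  finally show ?thesis .
qed

lemma lpoly_bounded_mult:
  fixes f g :: "'a::comm_ring_1 fls"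
  assumes f: "lpoly_bounded f N" and g: "lpoly_bounded g M"
  shows "lpoly_bounded (f * g) (N + M)"
  unfolding lpoly_bounded_def
proof (intro allI impI)
  fix n :: int assume n: "int (N + M) < \<bar>n\<bar>"
  have "fls_nth (f * g) n = (\<Sum>i\<in>{-int N..int N}. fls_nth f i * fls_nth g (n - i))"
    by (rule fls_times_nth_support[OF _ lpoly_bounded_support[OF f]]) simp
  also have "\<dots> = 0"
  proof (rule sum.neutral, rule ballI)
    fix i assume "i \<in> {-int N..int N}"
    with n have "int M < \<bar>n - i\<bar>" by auto
    with g show "fls_nth f i * fls_nth g (n - i) = 0" unfolding lpoly_bounded_def by auto
  qed
  finally show "fls_nth (f * g) n = 0" .
qed

lemma is_lpoly_mult: "is_lpoly f \<Longrightarrow> is_lpoly g \<Longrightarrow> is_lpoly (f * g :: 'a::comm_ring_1 fls)"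
  unfolding is_lpoly_iff_bounded using lpoly_bounded_mult by blast

lemma is_lpoly_add: "is_lpoly f \<Longrightarrow> is_lpoly g \<Longrightarrow> is_lpoly (f + g :: 'a::comm_ring_1 fls)"
  unfolding is_lpoly_def
  by (rule finite_subset[of _ "{k. fls_nth f k \<noteq> 0} \<union> {k. fls_nth g k \<noteq> 0}"]) auto

lemma is_lpoly_sum: "(\<And>x. x \<in> A \<Longrightarrow> is_lpoly (f x)) \<Longrightarrow> is_lpoly (\<Sum>x\<in>A. f x :: 'a::comm_ring_1 fls)"
proof (induct A rule: infinite_finite_induct)
  case (insert x F)
  then show ?case by (simp add: is_lpoly_add)
qed (simp_all add: is_lpoly_def)

lemma is_lp_tpoly_mult: "is_lp_tpoly P \<Longrightarrow> is_lp_tpoly Q \<Longrightarrow> is_lp_tpoly (P * Q :: 'a::comm_ring_1 fls poly)"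
  unfolding is_lp_tpoly_def coeff_mult by (auto intro!: is_lpoly_sum is_lpoly_mult)

lemma is_lp_tpoly_const: "is_lp_tpoly [:\<beta>:] \<longleftrightarrow> is_lpoly \<beta>"
proof
  show "is_lp_tpoly [:\<beta>:] \<Longrightarrow> is_lpoly \<beta>" unfolding is_lp_tpoly_def by (metis coeff_pCons_0)
  show "is_lpoly \<beta> \<Longrightarrow> is_lp_tpoly [:\<beta>:]" unfolding is_lp_tpoly_def by (simp add: coeff_const is_lpoly_def)
qed

lemma is_lp_tpoly_1: "is_lp_tpoly (1 :: 'a::comm_ring_1 fls poly)"
  by (simp add: one_pCons is_lp_tpoly_const is_lpoly_def)

lemma is_lp_tpoly_prod_list:
  "(\<And>p. p \<in> set ps \<Longrightarrow> is_lp_tpoly p) \<Longrightarrow> is_lp_tpoly (prod_list ps :: 'a::comm_ring_1 fls poly)"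
  by (induct ps) (auto intro: is_lp_tpoly_mult is_lp_tpoly_1)

definition tpoly_bounded :: "'a::zero fls poly \<Rightarrow> nat \<Rightarrow> bool" where
  "tpoly_bounded P N \<longleftrightarrow> (\<forall>m. lpoly_bounded (Polynomial.coeff P m) N)"

lemma is_lp_tpoly_bounded:
  assumes "is_lp_tpoly P" obtains N where "tpoly_bounded P N"
proof -
  obtain Nf where Nf: "\<And>m. lpoly_bounded (Polynomial.coeff P m) (Nf m)"
    using assms unfolding is_lp_tpoly_def is_lpoly_iff_bounded by metis
  have "lpoly_bounded (Polynomial.coeff P m) (Max (Nf ` {..degree P}))" for m
  proof (cases "m \<le> degree P")
    case True then show ?thesis by (intro lpoly_bounded_mono[OF Nf]) auto
  next
    case False then show ?thesis by (simp add: coeff_eq_0 lpoly_bounded_def)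
  qed
  then show thesis using that unfolding tpoly_bounded_def by blast
qed

section \<open>Initial forms\<close>

text \<open>The sign \<open>\<sigma> \<in> {1, -1}\<close> selects a direction on the X-exponents: \<open>deg_dir 1 = deg_plus\<close>
  and \<open>deg_dir (-1) = - deg_minus\<close>, so that both halves of the definition of an expansive
  polynomial become one condition \<open>expansive_dir \<sigma>\<close>.\<close>

definition deg_dir :: "int \<Rightarrow> 'a::zero fls \<Rightarrow> ereal" where
  "deg_dir \<sigma> f = (if \<sigma> = 1 then deg_plus f else - deg_minus f)"

definition expansive_dir :: "int \<Rightarrow> 'a::comm_ring_1 fls poly \<Rightarrow> bool" where
  "expansive_dir \<sigma> P \<longleftrightarrow> Polynomial.coeff P 0 \<noteq> 0 \<and> deg_dir \<sigma> (Polynomial.coeff P 0) > 0 \<and>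
     (\<forall>i\<in>{1..<degree P}. deg_dir \<sigma> (Polynomial.coeff P i) < deg_dir \<sigma> (Polynomial.coeff P 0))"

lemma expansive_poly_iff_dir:
  "expansive_poly P \<longleftrightarrow> is_lp_tpoly P \<and> lead_coeff P = 1 \<and> expansive_dir 1 P \<and> expansive_dir (-1) P"
proof -
  have "(- x < - y) = (y < x)" "(0 < - x) = (x < 0)" for x y :: ereal
    using ereal_minus_less_minus[of x 0] by (auto simp: ereal_minus_less_minus)
  then show ?thesis unfolding expansive_poly_def expansive_dir_def deg_dir_def by auto
qed

definition is_init_exp :: "int \<Rightarrow> 'a::zero fls poly \<Rightarrow> int \<Rightarrow> bool" where
  "is_init_exp \<sigma> P A \<longleftrightarrow> (\<forall>m n. A < n \<longrightarrow> fls_nth (Polynomial.coeff P m) (\<sigma> * n) = 0) \<and>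
     (\<exists>m. fls_nth (Polynomial.coeff P m) (\<sigma> * A) \<noteq> 0)"

definition init_exp :: "int \<Rightarrow> 'a::zero fls poly \<Rightarrow> int" where
  "init_exp \<sigma> P = (THE A. is_init_exp \<sigma> P A)"

definition init_form :: "int \<Rightarrow> 'a::zero fls poly \<Rightarrow> 'a poly" where
  "init_form \<sigma> P = map_poly (\<lambda>f. fls_nth f (\<sigma> * init_exp \<sigma> P)) P"

lemma is_init_exp_unique: "is_init_exp \<sigma> P A \<Longrightarrow> is_init_exp \<sigma> P B \<Longrightarrow> A = B"
  unfolding is_init_exp_def by (meson linorder_neqE_linordered_idom)

lemma init_exp_eqI: "is_init_exp \<sigma> P A \<Longrightarrow> init_exp \<sigma> P = A"
  unfolding init_exp_def using is_init_exp_unique by blast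

lemma is_init_exp_exists:
  fixes P :: "'a::zero fls poly"
  assumes "is_lp_tpoly P" "P \<noteq> 0" and \<sigma>: "\<sigma> = 1 \<or> \<sigma> = -1"
  obtains A where "is_init_exp \<sigma> P A"
proof -
  obtain N where N: "tpoly_bounded P N" using is_lp_tpoly_bounded assms(1) by blast
  let ?S = "{n. \<exists>m. fls_nth (Polynomial.coeff P m) (\<sigma> * n) \<noteq> 0}"
  have "?S \<subseteq> {-int N..int N}"
  proof
    fix n assume "n \<in> ?S"
    then obtain m where "fls_nth (Polynomial.coeff P m) (\<sigma> * n) \<noteq> 0" by blast
    then have "\<bar>\<sigma> * n\<bar> \<le> int N"
      using N unfolding tpoly_bounded_def lpoly_bounded_def by (meson not_less)
    then show "n \<in> {-int N..int N}" using \<sigma> by auto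
  qed
  then have fin: "finite ?S" by (rule finite_subset) simp
  obtain m where "Polynomial.coeff P m \<noteq> 0" using assms(2) by (meson leading_coeff_0_iff)
  then have "fls_nth (Polynomial.coeff P m) (fls_subdegree (Polynomial.coeff P m)) \<noteq> 0"
    by (rule nth_fls_subdegree_nonzero)
  then have "\<sigma> * fls_subdegree (Polynomial.coeff P m) \<in> ?S" using \<sigma> by auto
  then have "is_init_exp \<sigma> P (Max ?S)"
    unfolding is_init_exp_def using Max_in[OF fin] Max_ge[OF fin] by (auto simp: not_le[symmetric])
  then show thesis by (rule that)
qed

lemma is_init_exp_init_exp:
  "is_lp_tpoly P \<Longrightarrow> P \<noteq> 0 \<Longrightarrow> \<sigma> = 1 \<or> \<sigma> = -1 \<Longrightarrow> is_init_exp \<sigma> P (init_exp \<sigma> P)"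
  by (metis is_init_exp_exists init_exp_eqI)

lemma is_init_exp_const:
  "is_init_exp \<sigma> [:\<beta>:] a \<longleftrightarrow> fls_nth \<beta> (\<sigma> * a) \<noteq> 0 \<and> (\<forall>n>a. fls_nth \<beta> (\<sigma> * n) = 0)"
  unfolding is_init_exp_def by (auto simp: coeff_const)

lemma coeff_init_form:
  "Polynomial.coeff (init_form \<sigma> P) m = fls_nth (Polynomial.coeff P m) (\<sigma> * init_exp \<sigma> P)"
  unfolding init_form_def by (simp add: coeff_map_poly)

lemma fls_times_nth_dir:
  fixes f g :: "'a::comm_ring_1 fls"
  assumes \<sigma>: "\<sigma> = 1 \<or> \<sigma> = -1" and N: "lpoly_bounded f N"
    and fA: "\<forall>t>A. fls_nth f (\<sigma> * t) = 0" and gB: "\<forall>t>B. fls_nth g (\<sigma> * t) = 0"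
  shows "A + B < n \<Longrightarrow> fls_nth (f * g) (\<sigma> * n) = 0"
    and "fls_nth (f * g) (\<sigma> * (A + B)) = fls_nth f (\<sigma> * A) * fls_nth g (\<sigma> * B)"
proof -
  define M where "M = int N + \<bar>A\<bar>"
  have supp: "{i. fls_nth f i \<noteq> 0} \<subseteq> {-M..M}"
    using lpoly_bounded_support[OF N] unfolding M_def by fastforce
  have conv: "fls_nth (f * g) (\<sigma> * k) = (\<Sum>t\<in>{-M..M}. fls_nth f (\<sigma> * t) * fls_nth g (\<sigma> * (k - t)))"
    for k
  proof -
    have "fls_nth (f * g) (\<sigma> * k) = (\<Sum>i\<in>{-M..M}. fls_nth f i * fls_nth g (\<sigma> * k - i))"
      by (rule fls_times_nth_support[OF _ supp]) simp
    also have "\<dots> = (\<Sum>t\<in>{-M..M}. fls_nth f (\<sigma> * t) * fls_nth g (\<sigma> * k - \<sigma> * t))"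
      by (rule sum.reindex_bij_witness[of _ "\<lambda>t. \<sigma> * t" "\<lambda>t. \<sigma> * t"]) (use \<sigma> in auto)
    finally show ?thesis by (simp add: right_diff_distrib)
  qed
  have vanish: "fls_nth f (\<sigma> * t) * fls_nth g (\<sigma> * (n - t)) = 0" if "A + B \<le> n" "t \<noteq> A \<or> A + B < n" for t n
    using fA gB that by (cases "A < t") auto
  show "A + B < n \<Longrightarrow> fls_nth (f * g) (\<sigma> * n) = 0"
    unfolding conv using vanish by (intro sum.neutral) auto
  have "A \<in> {-M..M}" unfolding M_def by auto
  then have "fls_nth (f * g) (\<sigma> * (A + B)) = fls_nth f (\<sigma> * A) * fls_nth g (\<sigma> * (A + B - A))"
    unfolding conv using vanish by (subst sum.remove) (auto intro: sum.neutral)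
  then show "fls_nth (f * g) (\<sigma> * (A + B)) = fls_nth f (\<sigma> * A) * fls_nth g (\<sigma> * B)" by simp
qed

lemma is_init_exp_mult:
  fixes P Q :: "'a::idom fls poly"
  assumes \<sigma>: "\<sigma> = 1 \<or> \<sigma> = -1" and lp: "is_lp_tpoly P"
    and P: "is_init_exp \<sigma> P A" and Q: "is_init_exp \<sigma> Q B"
  shows "is_init_exp \<sigma> (P * Q) (A + B)"
    and "map_poly (\<lambda>f. fls_nth f (\<sigma> * (A + B))) (P * Q) =
      map_poly (\<lambda>f. fls_nth f (\<sigma> * A)) P * map_poly (\<lambda>f. fls_nth f (\<sigma> * B)) Q"
      (is "?slice = ?sliceP * ?sliceQ")
proof -
  obtain N where N: "tpoly_bounded P N" using is_lp_tpoly_bounded lp by blast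
  have "lpoly_bounded (Polynomial.coeff P i) N" "\<forall>t>A. fls_nth (Polynomial.coeff P i) (\<sigma> * t) = 0"
    and "\<forall>t>B. fls_nth (Polynomial.coeff Q j) (\<sigma> * t) = 0" for i j
    using N P Q unfolding tpoly_bounded_def is_init_exp_def by auto
  note key = fls_times_nth_dir[OF \<sigma> this]
  have above: "fls_nth (Polynomial.coeff (P * Q) k) (\<sigma> * n) = 0" if "A + B < n" for k n
    unfolding coeff_mult fls_nth_sum using key(1)[OF that] by (intro sum.neutral) auto
  have coeff_slice: "Polynomial.coeff ?slice k = Polynomial.coeff (?sliceP * ?sliceQ) k" for k
    using key(2) by (auto simp: coeff_map_poly coeff_mult fls_nth_sum intro!: sum.cong)
  then show slice: "?slice = ?sliceP * ?sliceQ" by (rule poly_eqI)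
  have "?sliceP \<noteq> 0" "?sliceQ \<noteq> 0"
    using P Q unfolding is_init_exp_def by (metis coeff_0 coeff_map_poly fls_zero_nth)+
  then obtain k where "Polynomial.coeff ?slice k \<noteq> 0"
    unfolding slice by (metis leading_coeff_0_iff mult_eq_0_iff)
  then show "is_init_exp \<sigma> (P * Q) (A + B)"
    unfolding is_init_exp_def using above by (auto simp: coeff_map_poly)
qed

lemma init_form_mult:
  fixes P Q :: "'a::idom fls poly"
  assumes \<sigma>: "\<sigma> = 1 \<or> \<sigma> = -1" and lp: "is_lp_tpoly P" "is_lp_tpoly Q" and nz: "P \<noteq> 0" "Q \<noteq> 0"
  shows "init_form \<sigma> (P * Q) = init_form \<sigma> P * init_form \<sigma> Q"
proof -
  note mult = is_init_exp_mult[OF \<sigma> lp(1) is_init_exp_init_exp[OF lp(1) nz(1) \<sigma>]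
      is_init_exp_init_exp[OF lp(2) nz(2) \<sigma>]]
  then show ?thesis unfolding init_form_def init_exp_eqI[OF mult(1)] by simp
qed

lemma init_form_1: "\<sigma> = 1 \<or> \<sigma> = -1 \<Longrightarrow> init_form \<sigma> (1 :: 'a::comm_ring_1 fls poly) = 1"
proof -
  assume "\<sigma> = 1 \<or> \<sigma> = -1"
  then have "is_init_exp \<sigma> (1 :: 'a fls poly) 0" by (auto simp: one_pCons is_init_exp_const)
  note exp = init_exp_eqI[OF this]
  show ?thesis unfolding init_form_def exp by (simp add: one_pCons)
qed

lemma init_form_prod_list:
  fixes ps :: "'a::idom fls poly list"
  assumes \<sigma>: "\<sigma> = 1 \<or> \<sigma> = -1" and ps: "\<And>p. p \<in> set ps \<Longrightarrow> is_lp_tpoly p \<and> p \<noteq> 0"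
  shows "init_form \<sigma> (prod_list ps) = prod_list (map (init_form \<sigma>) ps)"
  using ps
proof (induct ps)
  case (Cons p ps)
  then have "is_lp_tpoly (prod_list ps)" "prod_list ps \<noteq> 0"
    by (auto intro: is_lp_tpoly_prod_list simp: prod_list_zero_iff)
  with Cons show ?case by (simp add: init_form_mult[OF \<sigma>])
qed (simp add: init_form_1[OF \<sigma>])

lemma init_form_nonzero:
  "is_lp_tpoly P \<Longrightarrow> P \<noteq> 0 \<Longrightarrow> \<sigma> = 1 \<or> \<sigma> = -1 \<Longrightarrow> init_form \<sigma> P \<noteq> 0"
  by (metis coeff_0 coeff_init_form is_init_exp_def is_init_exp_init_exp)

lemma degree_init_form_prod_list_eq_0:
  fixes ps :: "'a::idom fls poly list"
  assumes \<sigma>: "\<sigma> = 1 \<or> \<sigma> = -1" and ps: "\<And>p. p \<in> set ps \<Longrightarrow> is_lp_tpoly p \<and> p \<noteq> 0"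
  shows "degree (init_form \<sigma> (prod_list ps)) = 0 \<longleftrightarrow> (\<forall>p\<in>set ps. degree (init_form \<sigma> p) = 0)"
proof -
  have "degree (prod_list (map (init_form \<sigma>) ps)) = sum_list (map degree (map (init_form \<sigma>) ps))"
    by (rule degree_prod_list_eq) (use ps init_form_nonzero[OF _ _ \<sigma>] in auto)
  then show ?thesis by (simp add: init_form_prod_list[OF \<sigma> ps] sum_list_eq_0_iff)
qed

lemma deg_dir_eq:
  fixes \<beta> :: "'a::zero fls"
  assumes lp: "is_lpoly \<beta>" and \<sigma>: "\<sigma> = 1 \<or> \<sigma> = -1" and top: "is_init_exp \<sigma> [:\<beta>:] a"
  shows "deg_dir \<sigma> \<beta> = a"
proof -
  have a: "fls_nth \<beta> (\<sigma> * a) \<noteq> 0" and above: "\<And>n. a < n \<Longrightarrow> fls_nth \<beta> (\<sigma> * n) = 0"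
    using top unfolding is_init_exp_const by auto
  then have nz: "\<beta> \<noteq> 0" by auto
  show ?thesis
  proof (cases "\<sigma> = 1")
    case True
    have "Max {k. fls_nth \<beta> k \<noteq> 0} = a"
      by (rule Max_eqI) (use lp a above True in \<open>auto simp: is_lpoly_def not_less[symmetric]\<close>)
    then show ?thesis unfolding deg_dir_def deg_plus_def using True nz by simp
  next
    case False
    with \<sigma> have "\<sigma> = -1" by simp
    have "fls_subdegree \<beta> = -a"
    proof (rule fls_subdegree_eqI)
      show "fls_nth \<beta> (-a) \<noteq> 0" using a \<open>\<sigma> = -1\<close> by simp
      fix k assume "k < -a"
      then show "fls_nth \<beta> k = 0" using above[of "-k"] \<open>\<sigma> = -1\<close> by simp
    qed
    then show ?thesis unfolding deg_dir_def deg_minus_def using \<open>\<sigma> = -1\<close> nz by simp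
  qed
qed

lemma deg_dir_less_iff:
  fixes \<beta> :: "'a::zero fls"
  assumes lp: "is_lpoly \<beta>" and \<sigma>: "\<sigma> = 1 \<or> \<sigma> = -1"
  shows "deg_dir \<sigma> \<beta> < ereal (real_of_int x) \<longleftrightarrow> (\<forall>n\<ge>x. fls_nth \<beta> (\<sigma> * n) = 0)"
proof (cases "\<beta> = 0")
  case True
  then show ?thesis using \<sigma> unfolding deg_dir_def deg_plus_def deg_minus_def by auto
next
  case False
  obtain a where top: "is_init_exp \<sigma> [:\<beta>:] a"
    by (rule is_init_exp_exists[of "[:\<beta>:]"]) (use lp False \<sigma> in \<open>auto simp: is_lp_tpoly_const\<close>)
  then show ?thesis
    unfolding deg_dir_eq[OF lp \<sigma> top] is_init_exp_const by (auto, meson not_le)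
qed

lemma deg_dir_1 [simp]: "deg_dir \<sigma> (1 :: 'a::zero_neq_one fls) = 0"
proof -
  have "{k. fls_nth (1 :: 'a fls) k \<noteq> 0} = {0}" by auto
  then show ?thesis by (simp add: deg_dir_def deg_plus_def deg_minus_def zero_ereal_def)
qed

lemma init_exp_attained_only_at_0_if_expansive_dir:
  fixes P :: "'a::comm_ring_1 fls poly"
  assumes lp: "is_lp_tpoly P" and mon: "lead_coeff P = 1" and \<sigma>: "\<sigma> = 1 \<or> \<sigma> = -1"
    and E: "expansive_dir \<sigma> P"
  shows "\<forall>m\<in>{1..degree P}. fls_nth (Polynomial.coeff P m) (\<sigma> * init_exp \<sigma> P) = 0"
proof -
  let ?c = "Polynomial.coeff P"
  have lpc: "is_lpoly (?c m)" for m using lp unfolding is_lp_tpoly_def by simp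
  have "?c 0 \<noteq> 0" using E unfolding expansive_dir_def by blast
  obtain a where a: "is_init_exp \<sigma> [:?c 0:] a"
    by (rule is_init_exp_exists[of "[:?c 0:]"]) (use \<open>?c 0 \<noteq> 0\<close> lpc \<sigma> in \<open>auto simp: is_lp_tpoly_const\<close>)
  have "deg_dir \<sigma> (?c m) < deg_dir \<sigma> (?c 0)" if "m \<in> {1..degree P}" for m
    using E that mon unfolding expansive_dir_def by (cases "m = degree P") auto
  then have low: "\<forall>n\<ge>a. fls_nth (?c m) (\<sigma> * n) = 0" if "m \<in> {1..degree P}" for m
    using that deg_dir_less_iff[OF lpc \<sigma>] unfolding deg_dir_eq[OF lpc \<sigma> a] by blast
  have "is_init_exp \<sigma> P a"
    unfolding is_init_exp_def
  proof (intro conjI allI impI)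
    fix m n assume "a < n"
    then show "fls_nth (?c m) (\<sigma> * n) = 0"
      using a low unfolding is_init_exp_const by (cases "m = 0"; cases "m \<le> degree P") (auto simp: coeff_eq_0)
  next
    show "\<exists>m. fls_nth (?c m) (\<sigma> * a) \<noteq> 0" using a unfolding is_init_exp_const by blast
  qed
  then show ?thesis using low init_exp_eqI by blast
qed

lemma expansive_dir_if_init_exp_attained_only_at_0:
  fixes P :: "'a::comm_ring_1 fls poly"
  assumes lp: "is_lp_tpoly P" and mon: "lead_coeff P = 1" and deg: "0 < degree P"
    and \<sigma>: "\<sigma> = 1 \<or> \<sigma> = -1"
    and only_0: "\<forall>m\<in>{1..degree P}. fls_nth (Polynomial.coeff P m) (\<sigma> * init_exp \<sigma> P) = 0"
  shows "expansive_dir \<sigma> P"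
proof -
  let ?c = "Polynomial.coeff P" and ?A = "init_exp \<sigma> P"
  have lpc: "is_lpoly (?c m)" for m using lp unfolding is_lp_tpoly_def by simp
  have "P \<noteq> 0" using mon by auto
  then have top: "is_init_exp \<sigma> P ?A" by (rule is_init_exp_init_exp[OF lp _ \<sigma>])
  then obtain m where m: "fls_nth (?c m) (\<sigma> * ?A) \<noteq> 0" unfolding is_init_exp_def by blast
  with only_0 have "m = 0" by (cases "m \<le> degree P") (auto simp: coeff_eq_0)
  with m top have "is_init_exp \<sigma> [:?c 0:] ?A"
    unfolding is_init_exp_const by (auto simp: is_init_exp_def)
  note dir_0 = deg_dir_eq[OF lpc \<sigma> this]
  have less: "deg_dir \<sigma> (?c m) < ?A" if "m \<in> {1..degree P}" for m
    unfolding deg_dir_less_iff[OF lpc \<sigma>]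
  proof (intro allI impI)
    fix n assume "?A \<le> n"
    then show "fls_nth (?c m) (\<sigma> * n) = 0"
      using only_0 that top unfolding is_init_exp_def by (cases "n = ?A") auto
  qed
  have "0 < ereal (real_of_int ?A)" using less[of "degree P"] mon deg by simp
  then show "expansive_dir \<sigma> P"
    unfolding expansive_dir_def dir_0 using less \<open>m = 0\<close> m by auto
qed

lemma expansive_dir_iff_init_exp:
  fixes P :: "'a::comm_ring_1 fls poly"
  assumes "is_lp_tpoly P" "lead_coeff P = 1" "0 < degree P" "\<sigma> = 1 \<or> \<sigma> = -1"
  shows "expansive_dir \<sigma> P \<longleftrightarrow>
    (\<forall>m\<in>{1..degree P}. fls_nth (Polynomial.coeff P m) (\<sigma> * init_exp \<sigma> P) = 0)"
  using init_exp_attained_only_at_0_if_expansive_dir expansive_dir_if_init_exp_attained_only_at_0 assms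
  by blast

lemma degree_init_form_eq_0_iff:
  "degree (init_form \<sigma> P) = 0 \<longleftrightarrow>
    (\<forall>m\<in>{1..degree P}. fls_nth (Polynomial.coeff P m) (\<sigma> * init_exp \<sigma> P) = 0)"
proof -
  have "degree (init_form \<sigma> P) = 0 \<longleftrightarrow> (\<forall>m>0. Polynomial.coeff (init_form \<sigma> P) m = 0)"
    using coeff_eq_0[of "init_form \<sigma> P"] degree_le[of 0 "init_form \<sigma> P"] by auto
  also have "\<dots> \<longleftrightarrow> (\<forall>m\<in>{1..degree P}. fls_nth (Polynomial.coeff P m) (\<sigma> * init_exp \<sigma> P) = 0)"
    unfolding coeff_init_form by (auto simp: coeff_eq_0)
  finally show ?thesis .
qed

lemma expansive_poly_prod_list_iff:
  fixes ps :: "'a::idom fls poly list"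
  assumes ps: "\<And>p. p \<in> set ps \<Longrightarrow> is_lp_tpoly p \<and> lead_coeff p = 1 \<and> 0 < degree p"
    and "ps \<noteq> []"
  shows "expansive_poly (prod_list ps) \<longleftrightarrow> (\<forall>p\<in>set ps. expansive_dir 1 p \<and> expansive_dir (-1) p)"
proof -
  let ?P = "prod_list ps"
  have dirs: "(1::int) = 1 \<or> (1::int) = -1" "(-1::int) = 1 \<or> (-1::int) = -1" by simp_all
  have nz: "\<And>p. p \<in> set ps \<Longrightarrow> is_lp_tpoly p \<and> p \<noteq> 0" using ps by fastforce
  have lp: "is_lp_tpoly ?P" using ps is_lp_tpoly_prod_list by blast
  have mon: "lead_coeff ?P = 1" using ps monic_prod_list by blast
  obtain p where p: "p \<in> set ps" using \<open>ps \<noteq> []\<close> by (cases ps) auto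
  have "degree p \<le> degree ?P"
    using p nz by (simp add: degree_prod_list_eq member_le_sum_list)
  then have deg: "0 < degree ?P" using ps p by fastforce
  have "expansive_dir \<sigma> ?P \<longleftrightarrow> (\<forall>p\<in>set ps. expansive_dir \<sigma> p)" if \<sigma>: "\<sigma> = 1 \<or> \<sigma> = -1" for \<sigma>
    using expansive_dir_iff_init_exp[OF lp mon deg \<sigma>] expansive_dir_iff_init_exp[OF _ _ _ \<sigma>] ps
      degree_init_form_prod_list_eq_0[OF \<sigma> nz] degree_init_form_eq_0_iff by metis
  then show ?thesis using lp mon dirs unfolding expansive_poly_iff_dir by blast
qed

section \<open>Characteristic polynomials of companion and block-diagonal matrices\<close>

lemma companion_mat_carrier: "companion_mat \<pi> \<in> carrier_mat (degree \<pi>) (degree \<pi>)"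
  unfolding companion_mat_def Let_def by auto

lemma dim_companion_mat [simp]:
  "dim_row (companion_mat \<pi>) = degree \<pi>" "dim_col (companion_mat \<pi>) = degree \<pi>"
  using companion_mat_carrier[of \<pi>] by auto

lemma dim_char_poly_matrix_companion [simp]:
  "dim_row (char_poly_matrix (companion_mat \<pi>)) = degree \<pi>"
  "dim_col (char_poly_matrix (companion_mat \<pi>)) = degree \<pi>"
  using char_poly_matrix_closed[OF companion_mat_carrier[of \<pi>]] by auto

lemma char_poly_matrix_companion_index:
  fixes \<pi> :: "'a::comm_ring_1 poly"
  assumes "i < degree \<pi>" "j < degree \<pi>"
  shows "char_poly_matrix (companion_mat \<pi>) $$ (i, j) = (if i = j then [:0, 1:] else 0) +
    [:if j = degree \<pi> - 1 then Polynomial.coeff \<pi> i else if i = j + 1 then -1 else 0:]"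
  using assms unfolding char_poly_matrix_def companion_mat_def Let_def by simp

lemma mat_delete_char_poly_matrix_companion_pCons:
  fixes \<pi> :: "'a::comm_ring_1 poly"
  assumes "\<pi> \<noteq> 0"
  shows "mat_delete (char_poly_matrix (companion_mat (pCons c \<pi>))) 0 0 =
    char_poly_matrix (companion_mat \<pi>)"
proof -
  have deg: "degree (pCons c \<pi>) = Suc (degree \<pi>)" using assms by simp
  show ?thesis
  proof (rule eq_matI)
    fix i j assume "i < dim_row (char_poly_matrix (companion_mat \<pi>))"
      "j < dim_col (char_poly_matrix (companion_mat \<pi>))"
    then show "mat_delete (char_poly_matrix (companion_mat (pCons c \<pi>))) 0 0 $$ (i, j) =
        char_poly_matrix (companion_mat \<pi>) $$ (i, j)"
      using deg assms by (auto simp: mat_delete_def char_poly_matrix_companion_index)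
  qed (simp_all add: deg)
qed

lemma cofactor_char_poly_matrix_companion_0_last:
  fixes \<pi> :: "'a::comm_ring_1 poly"
  assumes deg: "0 < degree \<pi>"
  shows "cofactor (char_poly_matrix (companion_mat \<pi>)) 0 (degree \<pi> - 1) = 1"
proof -
  let ?n = "degree \<pi> - 1"
  let ?D = "mat_delete (char_poly_matrix (companion_mat \<pi>)) 0 ?n"
  have D: "?D \<in> carrier_mat ?n ?n" by (simp add: mat_delete_def)
  have entry: "?D $$ (i, j) = (if j = Suc i then [:0, 1:] else 0) + (if i = j then [:-1:] else 0)"
    if "i < ?n" "j < ?n" for i j
    using that deg by (simp add: mat_delete_def char_poly_matrix_companion_index)
  have "upper_triangular ?D"
    unfolding upper_triangular_def using D entry by auto
  then have "det ?D = (\<Prod>i = 0..<?n. ?D $$ (i, i))"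
    using D by (simp add: det_upper_triangular prod_list_diag_prod)
  also have "\<dots> = (-1) ^ ?n"
    using entry by (simp add: one_pCons)
  finally show ?thesis
    unfolding cofactor_def by (simp add: power_mult_distrib[symmetric])
qed

lemma char_poly_companion:
  fixes \<pi> :: "'a::comm_ring_1 poly"
  assumes "lead_coeff \<pi> = 1"
  shows "char_poly (companion_mat \<pi>) = \<pi>"
  using assms
proof (induct \<pi> rule: pCons_induct)
  case (pCons c \<pi>)
  show ?case
  proof (cases "\<pi> = 0")
    case True
    with pCons.prems have "pCons c \<pi> = 1" by (simp add: one_pCons)
    then show ?thesis by (simp add: char_poly_def char_poly_matrix_def companion_mat_def)
  next
    case False
    let ?M = "char_poly_matrix (companion_mat (pCons c \<pi>))"
    let ?n = "degree (pCons c \<pi>)"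
    have deg: "?n = Suc (degree \<pi>)" using False by simp
    have M: "?M \<in> carrier_mat ?n ?n"
      using char_poly_matrix_closed[OF companion_mat_carrier] .
    have row_0: "?M $$ (0, j) = (if j = 0 then [:0, 1:] else 0) + (if j = ?n - 1 then [:c:] else 0)"
      if "j < ?n" for j
      using that by (simp add: char_poly_matrix_companion_index)
    have cof_0: "cofactor ?M 0 0 = \<pi>"
      using pCons False unfolding cofactor_def mat_delete_char_poly_matrix_companion_pCons[OF False]
      by (simp add: char_poly_def)
    have "char_poly (companion_mat (pCons c \<pi>)) = (\<Sum>j<?n. ?M $$ (0, j) * cofactor ?M 0 j)"
      unfolding char_poly_def by (rule laplace_expansion_row[OF M]) (simp add: False)
    also have "\<dots> = (\<Sum>j<?n. (if j = 0 then [:0, 1:] * cofactor ?M 0 j else 0) +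
        (if j = ?n - 1 then [:c:] * cofactor ?M 0 j else 0))"
      by (rule sum.cong) (simp_all add: row_0 distrib_right)
    also have "\<dots> = [:0, 1:] * cofactor ?M 0 0 + [:c:] * cofactor ?M 0 (?n - 1)"
      using False by (simp add: sum.distrib)
    also have "\<dots> = pCons c \<pi>"
      using cofactor_char_poly_matrix_companion_0_last[of "pCons c \<pi>"] False
      by (simp add: cof_0 pCons_0_as_mult[symmetric])
    finally show ?thesis .
  qed
qed simp

lemma diag_block_mat_Cons_square:
  assumes A: "A \<in> carrier_mat a a" and As: "\<forall>B\<in>set As. square_mat B"
  shows "diag_block_mat As \<in> carrier_mat (sum_list (map dim_row As)) (sum_list (map dim_row As))"
    and "diag_block_mat (A # As) = four_block_mat A (0\<^sub>m a (sum_list (map dim_row As)))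
      (0\<^sub>m (sum_list (map dim_row As)) a) (diag_block_mat As)"
proof -
  have cols: "map dim_col As = map dim_row As" using As by (auto simp: square_mat.simps)
  show B: "diag_block_mat As \<in> carrier_mat (sum_list (map dim_row As)) (sum_list (map dim_row As))"
    by (rule carrier_matI) (simp_all only: dim_diag_block_mat cols)
  have "dim_row A = a" "dim_col A = a" using A by auto
  with B show "diag_block_mat (A # As) = four_block_mat A (0\<^sub>m a (sum_list (map dim_row As)))
      (0\<^sub>m (sum_list (map dim_row As)) a) (diag_block_mat As)"
    unfolding diag_block_mat.simps Let_def by auto
qed

lemma char_poly_four_block_zero:
  fixes A :: "'a::idom mat"
  assumes A: "A \<in> carrier_mat n n" and B: "B \<in> carrier_mat m m"
  shows "char_poly (four_block_mat A (0\<^sub>m n m) (0\<^sub>m m n) B) = char_poly A * char_poly B"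
proof -
  have "char_poly_matrix (four_block_mat A (0\<^sub>m n m) (0\<^sub>m m n) B) =
     four_block_mat (char_poly_matrix A) (0\<^sub>m n m) (0\<^sub>m m n) (char_poly_matrix B)"
    by (rule eq_matI) (use A B in \<open>auto simp: char_poly_matrix_def\<close>)
  then show ?thesis unfolding char_poly_def
    by (simp add: det_four_block_mat_lower_left_zero[OF char_poly_matrix_closed[OF A] _ refl
          char_poly_matrix_closed[OF B]])
qed

lemma char_poly_diag_block_mat:
  fixes As :: "'a::idom mat list"
  assumes "\<forall>A\<in>set As. square_mat A"
  shows "char_poly (diag_block_mat As) = prod_list (map char_poly As)"
  using assms
proof (induct As)
  case Nil
  show ?case by (simp add: char_poly_def char_poly_matrix_def)
next
  case (Cons A As)
  have A: "A \<in> carrier_mat (dim_row A) (dim_row A)"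
    using Cons.prems by (intro carrier_matI) (simp_all add: square_mat.simps)
  have As: "\<forall>B\<in>set As. square_mat B" using Cons.prems by simp
  note blocks = diag_block_mat_Cons_square[OF A As]
  have "char_poly (diag_block_mat (A # As)) = char_poly A * char_poly (diag_block_mat As)"
    unfolding blocks(2) by (rule char_poly_four_block_zero[OF A blocks(1)])
  then show ?case using Cons.hyps[OF As] by simp
qed

lemma char_poly_diag_block_companion:
  fixes \<pi>s :: "'a::idom poly list"
  assumes "\<forall>\<pi>\<in>set \<pi>s. lead_coeff \<pi> = 1"
  shows "char_poly (diag_block_mat (map companion_mat \<pi>s)) = prod_list \<pi>s"
proof -
  have "map char_poly (map companion_mat \<pi>s) = \<pi>s"
    using assms by (induct \<pi>s) (simp_all add: char_poly_companion)
  then show ?thesis by (simp add: char_poly_diag_block_mat)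
qed

section \<open>Positive expansiveness via invisible configurations\<close>

definition zero_config :: "nat \<Rightarrow> int \<Rightarrow> 'a::zero vec" where
  "zero_config n = (\<lambda>i. 0\<^sub>v n)"

definition fls_act :: "'a::comm_ring_1 fls \<Rightarrow> (int \<Rightarrow> 'a) \<Rightarrow> int \<Rightarrow> 'a" where
  "fls_act f s i = (\<Sum>j\<in>{j. fls_nth f (-j) \<noteq> 0}. fls_nth f (-j) * s (i + j))"

lemma fls_act_0 [simp]: "fls_act 0 s i = 0"
  unfolding fls_act_def by simp

lemma fls_act_diff: "fls_act f (\<lambda>x. s x - s' x) i = fls_act f s i - fls_act f s' i"
  unfolding fls_act_def by (simp add: right_diff_distrib sum_subtractf)

lemma fls_act_uminus: "fls_act (- f) s x = - fls_act f s x"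
  unfolding fls_act_def by (simp add: sum_negf)

lemma fls_act_1: "fls_act 1 s x = s x"
proof -
  have "{j. fls_nth (1 :: 'a fls) (-j) \<noteq> 0} = {0}" by auto
  then show ?thesis unfolding fls_act_def by simp
qed

lemma lca_index:
  "k < n \<Longrightarrow> lca n M c i $ k = (\<Sum>l<n. fls_act (M $$ (k, l)) (\<lambda>x. c x $ l) i)"
  unfolding lca_def fls_act_def by simp

lemma dim_lca [simp]: "dim_vec (lca n M c i) = n"
  unfolding lca_def by simp

lemma lca_carrier [simp]: "lca n M c i \<in> carrier_vec n"
  unfolding lca_def by simp

lemma lca_pow_carrier: "\<forall>i. c i \<in> carrier_vec n \<Longrightarrow> (lca n M ^^ l) c i \<in> carrier_vec n"
  by (cases l) auto

lemma lca_diff: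
  assumes "\<And>i. c i \<in> carrier_vec n" "\<And>i. c' i \<in> carrier_vec n"
  shows "lca n M (\<lambda>i. c i - c' i) = (\<lambda>i. lca n M c i - lca n M c' i)"
proof (intro ext eq_vecI)
  fix i k assume "k < dim_vec (lca n M c i - lca n M c' i)"
  then have k: "k < n" by simp
  have "lca n M (\<lambda>i. c i - c' i) i $ k =
      (\<Sum>l<n. fls_act (M $$ (k, l)) (\<lambda>x. c x $ l) i - fls_act (M $$ (k, l)) (\<lambda>x. c' x $ l) i)"
    unfolding lca_index[OF k]
  proof (rule sum.cong[OF refl])
    fix l assume "l \<in> {..<n}"
    then have "(\<lambda>x. (c x - c' x) $ l) = (\<lambda>x. c x $ l - c' x $ l)"
      by (simp add: fun_eq_iff carrier_vecD[OF assms(2)])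
    then show "fls_act (M $$ (k, l)) (\<lambda>x. (c x - c' x) $ l) i =
        fls_act (M $$ (k, l)) (\<lambda>x. c x $ l) i - fls_act (M $$ (k, l)) (\<lambda>x. c' x $ l) i"
      by (simp add: fls_act_diff)
  qed
  then show "lca n M (\<lambda>i. c i - c' i) i $ k = (lca n M c i - lca n M c' i) $ k"
    using k by (simp add: lca_index sum_subtractf)
qed simp

lemma lca_pow_diff:
  assumes "\<And>i. c i \<in> carrier_vec n" "\<And>i. c' i \<in> carrier_vec n"
  shows "(lca n M ^^ l) (\<lambda>i. c i - c' i) = (\<lambda>i. (lca n M ^^ l) c i - (lca n M ^^ l) c' i)"
  by (induct l) (simp_all add: lca_diff lca_pow_carrier assms)

lemma lca_pow_zero_config: "(lca n M ^^ l) (zero_config n) = zero_config n"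
proof -
  have "lca n M (zero_config n) = zero_config n"
    by (intro ext eq_vecI) (simp_all add: lca_index zero_config_def fls_act_def)
  then show ?thesis by (induct l) auto
qed

lemma config_dist_ge_iff:
  assumes "c \<noteq> c'"
  shows "(1/2) ^ r \<le> config_dist c c' \<longleftrightarrow> (\<exists>j. \<bar>j\<bar> \<le> int r \<and> c j \<noteq> c' j)"
proof -
  define m where "m = (LEAST m. \<exists>j. nat \<bar>j\<bar> = m \<and> c j \<noteq> c' j)"
  obtain j0 where j0: "c j0 \<noteq> c' j0" using assms by auto
  have ex: "\<exists>j. nat \<bar>j\<bar> = m \<and> c j \<noteq> c' j"
    unfolding m_def by (rule LeastI[of _ "nat \<bar>j0\<bar>"]) (use j0 in auto)
  have least: "m \<le> nat \<bar>j\<bar>" if "c j \<noteq> c' j" for j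
    unfolding m_def by (rule Least_le) (use that in auto)
  have "config_dist c c' = (1/2) ^ m" unfolding config_dist_def m_def using assms by simp
  then have "(1/2) ^ r \<le> config_dist c c' \<longleftrightarrow> m \<le> r" by (simp add: power_decreasing_iff)
  also have "\<dots> \<longleftrightarrow> (\<exists>j. \<bar>j\<bar> \<le> int r \<and> c j \<noteq> c' j)"
  proof
    assume "m \<le> r"
    then show "\<exists>j. \<bar>j\<bar> \<le> int r \<and> c j \<noteq> c' j" using ex by force
  next
    assume "\<exists>j. \<bar>j\<bar> \<le> int r \<and> c j \<noteq> c' j"
    then obtain j where "\<bar>j\<bar> \<le> int r" "c j \<noteq> c' j" by blast
    then show "m \<le> r" using least[of j] by linarith
  qed
  finally show ?thesis .
qed

definition invisible_config :: "nat \<Rightarrow> 'a::comm_ring_1 fls mat \<Rightarrow> nat \<Rightarrow> (int \<Rightarrow> 'a vec) \<Rightarrow> bool" where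
  "invisible_config n M r e \<longleftrightarrow> (\<forall>i. e i \<in> carrier_vec n) \<and> e \<noteq> zero_config n \<and>
     (\<forall>l j. \<bar>j\<bar> \<le> int r \<longrightarrow> (lca n M ^^ l) e j = 0\<^sub>v n)"

lemma invisible_config_mono:
  assumes "invisible_config n M r e" "r' \<le> r"
  shows "invisible_config n M r' e"
proof -
  have "int r' \<le> int r" using assms(2) by simp
  then show ?thesis using assms(1) unfolding invisible_config_def by (meson order_trans)
qed

lemma minus_vec_eq_0_iff:
  fixes x y :: "'a::group_add vec"
  assumes x: "x \<in> carrier_vec n" and y: "y \<in> carrier_vec n"
  shows "x - y = 0\<^sub>v n \<longleftrightarrow> x = y"
proof
  assume diff: "x - y = 0\<^sub>v n"
  show "x = y"
  proof (rule eq_vecI)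
    fix i assume i: "i < dim_vec y"
    then have "(x - y) $ i = 0" using diff y by simp
    then show "x $ i = y $ i" using i by simp
  qed (use x y in simp)
qed (use y in simp)

lemma no_invisible_config_if_pos_expansive:
  assumes "pos_expansive_lca n M"
  shows "\<exists>r. \<nexists>e. invisible_config n M r e"
proof -
  obtain \<epsilon> :: real where "\<epsilon> > 0" and sep: "\<And>c c'. \<forall>i. c i \<in> carrier_vec n \<Longrightarrow>
      \<forall>i. c' i \<in> carrier_vec n \<Longrightarrow> c \<noteq> c' \<Longrightarrow>
      \<exists>l. config_dist ((lca n M ^^ l) c) ((lca n M ^^ l) c') \<ge> \<epsilon>"
    using assms unfolding pos_expansive_lca_def by blast
  obtain r where r: "(1/2::real) ^ r < \<epsilon>" using real_arch_pow_inv[OF \<open>\<epsilon> > 0\<close>, of "1/2"] by auto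
  have "\<not> invisible_config n M r e" for e
  proof
    assume "invisible_config n M r e"
    then have e: "\<forall>i. e i \<in> carrier_vec n" "e \<noteq> zero_config n"
      and window: "\<And>l j. \<bar>j\<bar> \<le> int r \<Longrightarrow> (lca n M ^^ l) e j = 0\<^sub>v n"
      unfolding invisible_config_def by auto
    have "\<forall>i. zero_config n i \<in> carrier_vec n" by (simp add: zero_config_def)
    then obtain l where l: "\<epsilon> \<le> config_dist ((lca n M ^^ l) e) (zero_config n)"
      using sep[OF e(1)] e(2) by (force simp: lca_pow_zero_config)
    with \<open>\<epsilon> > 0\<close> have nonzero: "(lca n M ^^ l) e \<noteq> zero_config n"
      by (auto simp: config_dist_def)
    from l r have "(1/2) ^ r \<le> config_dist ((lca n M ^^ l) e) (zero_config n)" by linarith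
    then obtain j where "\<bar>j\<bar> \<le> int r" "(lca n M ^^ l) e j \<noteq> zero_config n j"
      using config_dist_ge_iff[OF nonzero] by blast
    then show False using window by (simp add: zero_config_def)
  qed
  then show ?thesis by blast
qed

lemma pos_expansive_if_no_invisible_config:
  assumes r: "\<nexists>e. invisible_config n M r e"
  shows "pos_expansive_lca n M"
  unfolding pos_expansive_lca_def
proof (intro exI[of _ "(1/2::real) ^ r"] conjI allI impI)
  fix c c' :: "int \<Rightarrow> 'a vec"
  assume c: "\<forall>i. c i \<in> carrier_vec n" and c': "\<forall>i. c' i \<in> carrier_vec n" and "c \<noteq> c'"
  then have "(\<lambda>i. c i - c' i) \<noteq> zero_config n"
    unfolding zero_config_def fun_eq_iff by (simp add: minus_vec_eq_0_iff)
  moreover have "\<not> invisible_config n M r (\<lambda>i. c i - c' i)" using r by blast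
  ultimately obtain l j where j: "\<bar>j\<bar> \<le> int r" and "(lca n M ^^ l) (\<lambda>i. c i - c' i) j \<noteq> 0\<^sub>v n"
    using c c' unfolding invisible_config_def by auto
  then have differ: "(lca n M ^^ l) c j \<noteq> (lca n M ^^ l) c' j"
    using c c' by (simp add: lca_pow_diff minus_vec_eq_0_iff lca_pow_carrier)
  then have "(lca n M ^^ l) c \<noteq> (lca n M ^^ l) c'" by auto
  then have "(1/2) ^ r \<le> config_dist ((lca n M ^^ l) c) ((lca n M ^^ l) c')"
    using config_dist_ge_iff j differ by blast
  then show "\<exists>l. (1/2) ^ r \<le> config_dist ((lca n M ^^ l) c) ((lca n M ^^ l) c')" ..
qed simp

lemma pos_expansive_lca_iff_invisible:
  "pos_expansive_lca n M \<longleftrightarrow> (\<exists>r. \<nexists>e. invisible_config n M r e)"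
  using no_invisible_config_if_pos_expansive pos_expansive_if_no_invisible_config by blast

lemma sum_lessThan_add: "(\<Sum>l<a + b. f l) = (\<Sum>l<a. f l) + (\<Sum>l<b. f (a + l))"
  for f :: "nat \<Rightarrow> 'a::comm_monoid_add"
  by (induct b) (auto simp: ac_simps)

lemma lca_append:
  fixes A B :: "'a::comm_ring_1 fls mat"
  assumes A: "A \<in> carrier_mat a a" and B: "B \<in> carrier_mat b b"
    and c1: "\<forall>i. c1 i \<in> carrier_vec a" and c2: "\<forall>i. c2 i \<in> carrier_vec b"
  shows "lca (a + b) (four_block_mat A (0\<^sub>m a b) (0\<^sub>m b a) B) (\<lambda>i. c1 i @\<^sub>v c2 i) =
    (\<lambda>i. lca a A c1 i @\<^sub>v lca b B c2 i)"
proof (intro ext eq_vecI)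
  fix i k
  assume "k < dim_vec (lca a A c1 i @\<^sub>v lca b B c2 i)"
  then have k: "k < a + b" by simp
  let ?M = "four_block_mat A (0\<^sub>m a b) (0\<^sub>m b a) B"
  let ?act = "\<lambda>l. fls_act (?M $$ (k, l)) (\<lambda>x. (c1 x @\<^sub>v c2 x) $ l) i"
  have [simp]: "dim_vec (c1 x) = a" "dim_vec (c2 x) = b" for x using c1 c2 by auto
  have entry: "?M $$ (k, l) = (if k < a then if l < a then A $$ (k, l) else 0
      else if l < a then 0 else B $$ (k - a, l - a))" if "l < a + b" for l
    using A B k that by auto
  have "lca (a + b) ?M (\<lambda>i. c1 i @\<^sub>v c2 i) i $ k = (\<Sum>l<a. ?act l) + (\<Sum>l<b. ?act (a + l))"
    using k by (simp add: lca_index sum_lessThan_add)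
  also have "\<dots> = (lca a A c1 i @\<^sub>v lca b B c2 i) $ k"
  proof (cases "k < a")
    case True
    have "(\<Sum>l<a. ?act l) = lca a A c1 i $ k"
      unfolding lca_index[OF True] by (rule sum.cong) (simp_all add: entry True)
    moreover have "(\<Sum>l<b. ?act (a + l)) = 0"
      by (intro sum.neutral) (simp add: entry True)
    ultimately show ?thesis using True by simp
  next
    case False
    have "(\<Sum>l<a. ?act l) = 0"
      by (intro sum.neutral) (simp add: entry False)
    moreover have "k - a < b" using k False by simp
    moreover have "(\<Sum>l<b. ?act (a + l)) = lca b B c2 i $ (k - a)"
      unfolding lca_index[OF \<open>k - a < b\<close>] by (rule sum.cong) (simp_all add: entry False)
    ultimately show ?thesis using False k by simp
  qed
  finally show "lca (a + b) ?M (\<lambda>i. c1 i @\<^sub>v c2 i) i $ k = (lca a A c1 i @\<^sub>v lca b B c2 i) $ k" .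
qed simp

lemma lca_pow_append:
  fixes A B :: "'a::comm_ring_1 fls mat"
  assumes A: "A \<in> carrier_mat a a" and B: "B \<in> carrier_mat b b"
    and c1: "\<forall>i. c1 i \<in> carrier_vec a" and c2: "\<forall>i. c2 i \<in> carrier_vec b"
  shows "(lca (a + b) (four_block_mat A (0\<^sub>m a b) (0\<^sub>m b a) B) ^^ l) (\<lambda>i. c1 i @\<^sub>v c2 i) =
    (\<lambda>i. (lca a A ^^ l) c1 i @\<^sub>v (lca b B ^^ l) c2 i)"
proof (induct l)
  case (Suc l)
  then show ?case by (simp add: lca_append[OF A B] lca_pow_carrier c1 c2)
qed simp

lemma append_vec_eq_0_iff:
  "x \<in> carrier_vec a \<Longrightarrow> y \<in> carrier_vec b \<Longrightarrow> x @\<^sub>v y = 0\<^sub>v (a + b) \<longleftrightarrow> x = 0\<^sub>v a \<and> y = 0\<^sub>v b"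
proof -
  have "0\<^sub>v (a + b) = 0\<^sub>v a @\<^sub>v (0\<^sub>v b :: 'a::zero vec)" by (rule eq_vecI) auto
  then show "x \<in> carrier_vec a \<Longrightarrow> y \<in> carrier_vec b \<Longrightarrow> ?thesis" by (simp add: append_vec_eq)
qed

lemma invisible_config_append_iff:
  fixes A B :: "'a::comm_ring_1 fls mat"
  assumes A: "A \<in> carrier_mat a a" and B: "B \<in> carrier_mat b b"
    and c1: "\<forall>i. c1 i \<in> carrier_vec a" and c2: "\<forall>i. c2 i \<in> carrier_vec b"
  shows "invisible_config (a + b) (four_block_mat A (0\<^sub>m a b) (0\<^sub>m b a) B) r (\<lambda>i. c1 i @\<^sub>v c2 i) \<longleftrightarrow>
    (c1 \<noteq> zero_config a \<or> c2 \<noteq> zero_config b) \<and>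
    (\<forall>l j. \<bar>j\<bar> \<le> int r \<longrightarrow> (lca a A ^^ l) c1 j = 0\<^sub>v a \<and> (lca b B ^^ l) c2 j = 0\<^sub>v b)"
proof -
  have carrier: "\<forall>i. c1 i @\<^sub>v c2 i \<in> carrier_vec (a + b)" using c1 c2 by simp
  have zero: "(\<lambda>i. c1 i @\<^sub>v c2 i) = zero_config (a + b) \<longleftrightarrow> c1 = zero_config a \<and> c2 = zero_config b"
    unfolding zero_config_def fun_eq_iff using c1 c2 by (simp add: append_vec_eq_0_iff all_conj_distrib)
  have window: "(lca (a + b) (four_block_mat A (0\<^sub>m a b) (0\<^sub>m b a) B) ^^ l) (\<lambda>i. c1 i @\<^sub>v c2 i) j = 0\<^sub>v (a + b)
      \<longleftrightarrow> (lca a A ^^ l) c1 j = 0\<^sub>v a \<and> (lca b B ^^ l) c2 j = 0\<^sub>v b" for l j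
    unfolding lca_pow_append[OF A B c1 c2]
    by (rule append_vec_eq_0_iff[OF lca_pow_carrier[OF c1] lca_pow_carrier[OF c2]])
  show ?thesis unfolding invisible_config_def using carrier zero window by simp
qed

lemma invisible_config_four_block_iff:
  fixes A B :: "'a::comm_ring_1 fls mat"
  assumes A: "A \<in> carrier_mat a a" and B: "B \<in> carrier_mat b b"
  shows "(\<exists>e. invisible_config (a + b) (four_block_mat A (0\<^sub>m a b) (0\<^sub>m b a) B) r e) \<longleftrightarrow>
    (\<exists>e. invisible_config a A r e) \<or> (\<exists>e. invisible_config b B r e)"
    (is "(\<exists>e. invisible_config _ ?M r e) \<longleftrightarrow> _")
proof
  assume "\<exists>e. invisible_config (a + b) ?M r e"
  then obtain e where e: "invisible_config (a + b) ?M r e" ..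
  define e1 where "e1 = (\<lambda>i. vec_first (e i) a)"
  define e2 where "e2 = (\<lambda>i. vec_last (e i) b)"
  have "e = (\<lambda>i. e1 i @\<^sub>v e2 i)"
    using e unfolding invisible_config_def e1_def e2_def by auto
  with e have "invisible_config (a + b) ?M r (\<lambda>i. e1 i @\<^sub>v e2 i)" by simp
  moreover have "\<forall>i. e1 i \<in> carrier_vec a" "\<forall>i. e2 i \<in> carrier_vec b"
    by (simp_all add: e1_def e2_def)
  ultimately have "(e1 \<noteq> zero_config a \<or> e2 \<noteq> zero_config b) \<and>
      (\<forall>l j. \<bar>j\<bar> \<le> int r \<longrightarrow> (lca a A ^^ l) e1 j = 0\<^sub>v a \<and> (lca b B ^^ l) e2 j = 0\<^sub>v b)"
    using invisible_config_append_iff[OF A B] by blast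
  then have "invisible_config a A r e1 \<or> invisible_config b B r e2"
    unfolding invisible_config_def e1_def e2_def by simp
  then show "(\<exists>e. invisible_config a A r e) \<or> (\<exists>e. invisible_config b B r e)" by blast
next
  have zero: "\<forall>i. zero_config n i \<in> carrier_vec n"
    "(lca n M ^^ l) (zero_config n) j = 0\<^sub>v n" for n and M :: "'a fls mat" and l j
    unfolding lca_pow_zero_config by (simp_all add: zero_config_def)
  assume "(\<exists>e. invisible_config a A r e) \<or> (\<exists>e. invisible_config b B r e)"
  then show "\<exists>e. invisible_config (a + b) ?M r e"
  proof (elim disjE exE)
    fix e assume e: "invisible_config a A r e"
    then have "invisible_config (a + b) ?M r (\<lambda>i. e i @\<^sub>v zero_config b i)"
      by (subst invisible_config_append_iff[OF A B _ zero(1)]) (simp_all add: invisible_config_def zero(2))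
    then show ?thesis by blast
  next
    fix e assume e: "invisible_config b B r e"
    then have "invisible_config (a + b) ?M r (\<lambda>i. zero_config a i @\<^sub>v e i)"
      by (subst invisible_config_append_iff[OF A B zero(1)]) (simp_all add: invisible_config_def zero(2))
    then show ?thesis by blast
  qed
qed

lemma pos_expansive_lca_four_block:
  fixes A B :: "'a::comm_ring_1 fls mat"
  assumes A: "A \<in> carrier_mat a a" and B: "B \<in> carrier_mat b b"
  shows "pos_expansive_lca (a + b) (four_block_mat A (0\<^sub>m a b) (0\<^sub>m b a) B) \<longleftrightarrow>
    pos_expansive_lca a A \<and> pos_expansive_lca b B"
  unfolding pos_expansive_lca_iff_invisible invisible_config_four_block_iff[OF A B]
proof safe
  fix r1 r2
  assume r1: "\<nexists>e. invisible_config a A r1 e" and r2: "\<nexists>e. invisible_config b B r2 e"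
  have "\<nexists>e. invisible_config a A (max r1 r2) e" "\<nexists>e. invisible_config b B (max r1 r2) e"
    using r1 r2 invisible_config_mono max.cobounded1 max.cobounded2 by blast+
  then show "\<exists>r. \<not> ((\<exists>e. invisible_config a A r e) \<or> (\<exists>e. invisible_config b B r e))" by blast
qed blast+

lemma pos_expansive_lca_0: "pos_expansive_lca 0 M"
proof -
  have "e i = 0\<^sub>v 0" if "e i \<in> carrier_vec 0" for e :: "int \<Rightarrow> 'a vec" and i
    by (rule eq_vecI) (use that in auto)
  then have "e = zero_config 0" if "\<forall>i. e i \<in> carrier_vec 0" for e :: "int \<Rightarrow> 'a vec"
    using that unfolding zero_config_def by blast
  then show ?thesis unfolding pos_expansive_lca_iff_invisible invisible_config_def by blast
qed

lemma pos_expansive_lca_diag_block_mat: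
  fixes Cs :: "'a::comm_ring_1 fls mat list"
  assumes "\<forall>C\<in>set Cs. square_mat C"
  shows "pos_expansive_lca (sum_list (map dim_row Cs)) (diag_block_mat Cs) \<longleftrightarrow>
    (\<forall>C\<in>set Cs. pos_expansive_lca (dim_row C) C)"
  using assms
proof (induct Cs)
  case (Cons C Cs)
  have C: "C \<in> carrier_mat (dim_row C) (dim_row C)"
    using Cons.prems by (intro carrier_matI) simp_all
  have Cs: "\<forall>B\<in>set Cs. square_mat B" using Cons.prems by simp
  note blocks = diag_block_mat_Cons_square[OF C Cs]
  show ?case
    using Cons.hyps[OF Cs] unfolding blocks(2) by (simp add: pos_expansive_lca_four_block[OF C blocks(1)])
qed (simp add: pos_expansive_lca_0)

section \<open>Linear recurrences with Laurent polynomial coefficients\<close>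

text \<open>A solution \<open>y\<close> is a sequence over \<open>\<int>\<close> evolving in time \<open>l\<close>; the recurrence is
  \<open>\<Sum>m\<le>d. \<beta>\<^sub>m y\<^sub>l\<^sub>+\<^sub>m = 0\<close>, where \<open>\<beta>\<^sub>m = \<Sum>j. b m j X\<^sup>j\<close> is supported in \<open>[-K, K]\<close> and acts by
  convolution.\<close>

definition wconv :: "(int \<Rightarrow> 'a::comm_ring_1) \<Rightarrow> int \<Rightarrow> (int \<Rightarrow> 'a) \<Rightarrow> int \<Rightarrow> 'a" where
  "wconv b K s x = (\<Sum>j\<in>{-K..K}. b j * s (x - j))"

definition solves_rec :: "(nat \<Rightarrow> int \<Rightarrow> 'a::comm_ring_1) \<Rightarrow> nat \<Rightarrow> int \<Rightarrow> (nat \<Rightarrow> int \<Rightarrow> 'a) \<Rightarrow> bool" where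
  "solves_rec b d K y \<longleftrightarrow> (\<forall>l x. (\<Sum>m\<le>d. wconv (b m) K (y (l + m)) x) = 0)"

lemma sum_eq_single:
  assumes "finite A" "a \<in> A" "\<And>x. x \<in> A \<Longrightarrow> x \<noteq> a \<Longrightarrow> f x = 0"
  shows "sum f A = f a"
proof -
  have "sum f A = f a + sum f (A - {a})" by (rule sum.remove[OF assms(1,2)])
  also have "sum f (A - {a}) = 0" by (rule sum.neutral) (use assms(3) in auto)
  finally show ?thesis by simp
qed

lemma wconv_reflect:
  assumes \<sigma>: "\<sigma> = 1 \<or> \<sigma> = -1"
  shows "wconv (\<lambda>j. b (\<sigma> * j)) K (\<lambda>x. s (\<sigma> * x)) x = wconv b K s (\<sigma> * x)"
  unfolding wconv_def
  by (rule sum.reindex_bij_witness[of _ "\<lambda>j. \<sigma> * j" "\<lambda>j. \<sigma> * j"]) (use \<sigma> in \<open>auto simp: algebra_simps\<close>)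

lemma solves_rec_reflect:
  assumes \<sigma>: "\<sigma> = 1 \<or> \<sigma> = -1"
  shows "solves_rec (\<lambda>m j. b m (\<sigma> * j)) d K (\<lambda>l x. y l (\<sigma> * x)) \<longleftrightarrow> solves_rec b d K y"
  unfolding solves_rec_def wconv_reflect[OF \<sigma>]
proof (intro iffI allI)
  fix l x
  assume "\<forall>l x. (\<Sum>m\<le>d. wconv (b m) K (y (l + m)) (\<sigma> * x)) = 0"
  then have "(\<Sum>m\<le>d. wconv (b m) K (y (l + m)) (\<sigma> * (\<sigma> * x))) = 0" by blast
  then show "(\<Sum>m\<le>d. wconv (b m) K (y (l + m)) x) = 0" using \<sigma> by auto
qed simp

lemma solves_rec_vanish_step:
  fixes b :: "nat \<Rightarrow> int \<Rightarrow> 'a::idom"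
  assumes rec: "solves_rec b d K y" and j0K: "\<bar>j0\<bar> \<le> K"
    and b0: "b 0 j0 \<noteq> 0" "\<forall>j>j0. b 0 j = 0" and bm: "\<forall>m\<in>{1..d}. \<forall>j\<ge>j0. b m j = 0"
    and zero: "\<forall>l w. z < w \<and> w \<le> z + 2 * K \<longrightarrow> y l w = 0"
  shows "y l z = 0"
proof -
  define x where "x = z + j0"
  have other: "b m j * y (l + m) (x - j) = 0" if "m \<le> d" "j \<in> {-K..K}" "(m, j) \<noteq> (0, j0)" for m j
  proof (cases "b m j = 0")
    case False
    have "j < j0"
    proof (cases "m = 0")
      case True
      then have "\<not> j0 < j" using b0(2) False by auto
      with True that show ?thesis by auto
    next
      case m: False
      then have "\<not> j0 \<le> j" using bm \<open>m \<le> d\<close> False by auto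
      then show ?thesis by simp
    qed
    then have "z < x - j \<and> x - j \<le> z + 2 * K" using that j0K unfolding x_def by auto
    then show ?thesis using zero by simp
  qed simp
  have "(\<Sum>m\<le>d. wconv (b m) K (y (l + m)) x) = wconv (b 0) K (y (l + 0)) x"
    by (rule sum_eq_single) (auto simp: wconv_def other intro!: sum.neutral)
  also have "\<dots> = b 0 j0 * y l z"
    unfolding wconv_def
    by (subst sum_eq_single[of _ j0]) (use j0K other[of 0] in \<open>auto simp: x_def\<close>)
  finally have "b 0 j0 * y l z = 0" using rec unfolding solves_rec_def by simp
  then show ?thesis using b0 by simp
qed

lemma solves_rec_vanish_left:
  fixes b :: "nat \<Rightarrow> int \<Rightarrow> 'a::idom"
  assumes rec: "solves_rec b d K y" and j0K: "\<bar>j0\<bar> \<le> K"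
    and b0: "b 0 j0 \<noteq> 0" "\<forall>j>j0. b 0 j = 0" and bm: "\<forall>m\<in>{1..d}. \<forall>j\<ge>j0. b m j = 0"
    and zero: "\<forall>l z. a - 2 * K \<le> z \<and> z \<le> a \<longrightarrow> y l z = 0"
  shows "\<forall>l z. z \<le> a \<longrightarrow> y l z = 0"
proof -
  have "\<forall>l z. a - 2 * K - int n \<le> z \<and> z \<le> a \<longrightarrow> y l z = 0" for n
  proof (induct n)
    case 0 then show ?case using zero by simp
  next
    case (Suc n)
    have next_cell: "y l (a - 2 * K - int n - 1) = 0" for l
      by (rule solves_rec_vanish_step[OF rec j0K b0 bm]) (use Suc in auto)
    show ?case
    proof (intro allI impI)
      fix l z assume z: "a - 2 * K - int (Suc n) \<le> z \<and> z \<le> a"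
      show "y l z = 0"
      proof (cases "z = a - 2 * K - int n - 1")
        case True then show ?thesis using next_cell by simp
      next
        case False then show ?thesis using Suc z by auto
      qed
    qed
  qed
  note step = this
  show ?thesis
  proof (intro allI impI)
    fix l z assume "z \<le> a"
    then have "a - 2 * K - int (nat (a - z)) \<le> z \<and> z \<le> a" using j0K by simp
    with step show "y l z = 0" by blast
  qed
qed

lemma solves_rec_vanish_dir:
  fixes b :: "nat \<Rightarrow> int \<Rightarrow> 'a::idom"
  assumes \<sigma>: "\<sigma> = 1 \<or> \<sigma> = -1" and rec: "solves_rec b d K y" and j0K: "\<bar>j0\<bar> \<le> K"
    and b0: "b 0 (\<sigma> * j0) \<noteq> 0" "\<forall>j>j0. b 0 (\<sigma> * j) = 0"
    and bm: "\<forall>m\<in>{1..d}. \<forall>j\<ge>j0. b m (\<sigma> * j) = 0"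
    and zero: "\<forall>l z. a - 2 * K \<le> z \<and> z \<le> a \<longrightarrow> y l (\<sigma> * z) = 0"
  shows "\<forall>l z. z \<le> a \<longrightarrow> y l (\<sigma> * z) = 0"
  using solves_rec_vanish_left[of "\<lambda>m j. b m (\<sigma> * j)" d K "\<lambda>l x. y l (\<sigma> * x)"]
    solves_rec_reflect[OF \<sigma>] assms by blast

text \<open>The recurrence at \<open>x = c + J\<close> is solved for its term \<open>b m1 J * y (l + m1) c\<close>: \<open>J\<close> is the
  top exponent and \<open>m1\<close> the last index attaining it, so all other terms involve earlier times or
  positions right of \<open>c\<close>. Recursion on \<open>(c0 - c, l)\<close> then determines a solution vanishing right
  of \<open>c0\<close> that starts from a delta at \<open>(0, c0)\<close>.\<close>

function rec_solution ::
    "(nat \<Rightarrow> int \<Rightarrow> 'a::field) \<Rightarrow> nat \<Rightarrow> int \<Rightarrow> int \<Rightarrow> nat \<Rightarrow> int \<Rightarrow> nat \<Rightarrow> int \<Rightarrow> 'a" where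
  "rec_solution b d K J m1 c0 l c =
    (if c0 < c then 0
     else if l < m1 then (if l = 0 \<and> c = c0 then 1 else 0)
     else - inverse (b m1 J) * ((\<Sum>m<m1. b m J * rec_solution b d K J m1 c0 (l - m1 + m) c) +
        (\<Sum>m\<le>d. \<Sum>j\<in>{-K..<J}. b m j * rec_solution b d K J m1 c0 (l - m1 + m) (c + J - j))))"
  by pat_completeness auto
termination
  by (relation "measures [\<lambda>(b, d, K, J, m1, c0, l, c). nat (c0 + 1 - c), \<lambda>(b, d, K, J, m1, c0, l, c). l]")
    auto

declare rec_solution.simps [simp del]

lemma sum_split_at_top:
  fixes T :: "nat \<Rightarrow> int \<Rightarrow> 'a::comm_monoid_add"
  assumes JK: "\<bar>J\<bar> \<le> K" and m1: "m1 \<le> d"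
    and above_J: "\<forall>m\<le>d. \<forall>j>J. T m j = 0" and above_m1: "\<forall>m. m1 < m \<and> m \<le> d \<longrightarrow> T m J = 0"
  shows "(\<Sum>m\<le>d. \<Sum>j\<in>{-K..K}. T m j) = (\<Sum>m\<le>d. \<Sum>j\<in>{-K..<J}. T m j) + ((\<Sum>m<m1. T m J) + T m1 J)"
proof -
  have split_j: "(\<Sum>j\<in>{-K..K}. T m j) = (\<Sum>j\<in>{-K..<J}. T m j) + T m J" if "m \<le> d" for m
  proof -
    have "{-K..K} = {-K..<J} \<union> {J..K}" "{-K..<J} \<inter> {J..K} = {}" using JK by auto
    then have "(\<Sum>j\<in>{-K..K}. T m j) = (\<Sum>j\<in>{-K..<J}. T m j) + (\<Sum>j\<in>{J..K}. T m j)"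
      by (simp add: sum.union_disjoint)
    also have "(\<Sum>j\<in>{J..K}. T m j) = T m J"
      by (rule sum_eq_single) (use JK above_J that in auto)
    finally show ?thesis .
  qed
  have split_m: "(\<Sum>m\<le>d. T m J) = (\<Sum>m<m1. T m J) + T m1 J"
  proof -
    have "{..d} = {..<m1} \<union> {m1..d}" "{..<m1} \<inter> {m1..d} = {}" using m1 by auto
    then have "(\<Sum>m\<le>d. T m J) = (\<Sum>m<m1. T m J) + (\<Sum>m\<in>{m1..d}. T m J)"
      by (simp add: sum.union_disjoint)
    also have "(\<Sum>m\<in>{m1..d}. T m J) = T m1 J"
      by (rule sum_eq_single) (use m1 above_m1 in auto)
    finally show ?thesis .
  qed
  show ?thesis by (simp add: split_j sum.distrib split_m)
qed

lemma rec_solution_solves: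
  fixes b :: "nat \<Rightarrow> int \<Rightarrow> 'a::field"
  assumes JK: "\<bar>J\<bar> \<le> K" and top: "\<forall>m\<le>d. \<forall>j>J. b m j = 0"
    and m1: "0 < m1" "m1 \<le> d" "b m1 J \<noteq> 0" and m1_max: "\<forall>m. m1 < m \<and> m \<le> d \<longrightarrow> b m J = 0"
  shows "solves_rec b d K (rec_solution b d K J m1 c0)" and "rec_solution b d K J m1 c0 0 c0 \<noteq> 0"
    and "\<forall>l x. c0 < x \<longrightarrow> rec_solution b d K J m1 c0 l x = 0"
proof -
  define y where "y = rec_solution b d K J m1 c0"
  have y_right: "y l c = 0" if "c0 < c" for l c
    unfolding y_def using that by (subst rec_solution.simps) simp
  then show "\<forall>l x. c0 < x \<longrightarrow> rec_solution b d K J m1 c0 l x = 0" unfolding y_def by blast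
  show "rec_solution b d K J m1 c0 0 c0 \<noteq> 0" using m1 by (subst rec_solution.simps) simp
  have y_step: "b m1 J * y (l + m1) c = - ((\<Sum>m<m1. b m J * y (l + m) c) +
        (\<Sum>m\<le>d. \<Sum>j\<in>{-K..<J}. b m j * y (l + m) (c + J - j)))" if "c \<le> c0" for l c
    unfolding y_def using that m1 by (subst rec_solution.simps) (simp add: field_simps)
  have "(\<Sum>m\<le>d. wconv (b m) K (y (l + m)) x) = 0" for l x
  proof (cases "c0 < x - J")
    case True
    have "b m j * y (l + m) (x - j) = 0" if "m \<le> d" "j \<in> {-K..K}" for m j
      using top that y_right[of "x - j"] True by (cases "J < j") auto
    then show ?thesis unfolding wconv_def by (simp add: sum.neutral)
  next
    case False
    define T where "T m j = b m j * y (l + m) (x - j)" for m j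
    have "(\<Sum>m\<le>d. wconv (b m) K (y (l + m)) x) =
        (\<Sum>m\<le>d. \<Sum>j\<in>{-K..<J}. T m j) + ((\<Sum>m<m1. T m J) + T m1 J)"
      unfolding wconv_def T_def[symmetric]
      by (rule sum_split_at_top[OF JK m1(2)]) (use top m1_max in \<open>simp_all add: T_def\<close>)
    also have "\<dots> = 0"
    proof -
      have "T m1 J = - ((\<Sum>m<m1. T m J) + (\<Sum>m\<le>d. \<Sum>j\<in>{-K..<J}. T m j))"
        using y_step[of "x - J" l] False unfolding T_def by simp
      then show ?thesis by simp
    qed
    finally show ?thesis .
  qed
  then show "solves_rec b d K (rec_solution b d K J m1 c0)" unfolding solves_rec_def y_def by blast
qed

lemma exists_rec_solution_dir:
  fixes b :: "nat \<Rightarrow> int \<Rightarrow> 'a::field"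
  assumes \<sigma>: "\<sigma> = 1 \<or> \<sigma> = -1" and JK: "\<bar>J\<bar> \<le> K" and top: "\<forall>m\<le>d. \<forall>j>J. b m (\<sigma> * j) = 0"
    and m1: "0 < m1" "m1 \<le> d" "b m1 (\<sigma> * J) \<noteq> 0"
    and m1_max: "\<forall>m. m1 < m \<and> m \<le> d \<longrightarrow> b m (\<sigma> * J) = 0"
  obtains y where "solves_rec b d K y" "y 0 (\<sigma> * c0) \<noteq> 0" "\<forall>l x. c0 < x \<longrightarrow> y l (\<sigma> * x) = 0"
proof -
  let ?b = "\<lambda>m j. b m (\<sigma> * j)" and ?y = "rec_solution (\<lambda>m j. b m (\<sigma> * j)) d K J m1 c0"
  note sol = rec_solution_solves[of J K d ?b m1 c0, OF JK top m1 m1_max]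
  have \<sigma>\<sigma>: "\<sigma> * (\<sigma> * x) = x" for x using \<sigma> by auto
  have "solves_rec ?b d K (\<lambda>l x. ?y l (\<sigma> * (\<sigma> * x)))" using sol(1) by (simp add: \<sigma>\<sigma>)
  then have "solves_rec b d K (\<lambda>l x. ?y l (\<sigma> * x))"
    using solves_rec_reflect[OF \<sigma>, of b d K "\<lambda>l x. ?y l (\<sigma> * x)"] by simp
  moreover have "?y 0 (\<sigma> * (\<sigma> * c0)) \<noteq> 0" using sol(2) by (simp add: \<sigma>\<sigma>)
  moreover have "\<forall>l x. c0 < x \<longrightarrow> ?y l (\<sigma> * (\<sigma> * x)) = 0" using sol(3) by (simp add: \<sigma>\<sigma>)
  ultimately show thesis by (rule that)
qed

section \<open>The automaton of a companion matrix\<close>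

lemma fls_act_eq_wconv:
  fixes f :: "'a::comm_ring_1 fls"
  assumes "lpoly_bounded f K"
  shows "fls_act f s x = wconv (fls_nth f) (int K) s x"
proof -
  have "fls_act f s x = (\<Sum>j\<in>{-int K..int K}. fls_nth f (-j) * s (x + j))"
    unfolding fls_act_def
  proof (rule sum.mono_neutral_left)
    show "{j. fls_nth f (-j) \<noteq> 0} \<subseteq> {-int K..int K}"
      using assms unfolding lpoly_bounded_def by (force simp: not_less[symmetric])
  qed auto
  also have "\<dots> = wconv (fls_nth f) (int K) s x"
    unfolding wconv_def by (rule sum.reindex_bij_witness[of _ uminus uminus]) auto
  finally show ?thesis .
qed

lemma wconv_fls_1: "0 \<le> K \<Longrightarrow> wconv (fls_nth 1) K s x = s x"
  unfolding wconv_def by (subst sum_eq_single[of _ 0]) auto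

locale companion_lca =
  fixes \<pi> :: "'a::field fls poly" and K :: nat
  assumes lp: "is_lp_tpoly \<pi>" and monic: "lead_coeff \<pi> = 1" and deg_pos: "0 < degree \<pi>"
    and bounded: "tpoly_bounded \<pi> K"
begin

abbreviation "d \<equiv> degree \<pi>"
abbreviation "F \<equiv> lca (degree \<pi>) (companion_mat \<pi>)"
abbreviation "\<beta> m \<equiv> fls_nth (Polynomial.coeff \<pi> m)"

lemma fls_act_companion_entry:
  assumes "k < d" "l < d"
  shows "fls_act (companion_mat \<pi> $$ (k, l)) s x =
    (if l = d - 1 then - wconv (\<beta> k) (int K) s x else 0) + (if k = l + 1 then s x else 0)"
proof -
  have "lpoly_bounded (Polynomial.coeff \<pi> k) K" using bounded unfolding tpoly_bounded_def by simp
  then show ?thesis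
    using assms unfolding companion_mat_def Let_def
    by (auto simp: fls_act_uminus fls_act_1 fls_act_eq_wconv)
qed

lemma lca_companion_index:
  assumes k: "k < d"
  shows "F c x $ k = (if k = 0 then 0 else c x $ (k - 1)) - wconv (\<beta> k) (int K) (\<lambda>z. c z $ (d - 1)) x"
proof -
  have "F c x $ k = (\<Sum>l<d. (if l = d - 1 then - wconv (\<beta> k) (int K) (\<lambda>z. c z $ l) x else 0) +
      (if k = l + 1 then c x $ l else 0))"
    unfolding lca_index[OF k] using k by (intro sum.cong) (simp_all add: fls_act_companion_entry)
  also have "\<dots> = - wconv (\<beta> k) (int K) (\<lambda>z. c z $ (d - 1)) x + (if k = 0 then 0 else c x $ (k - 1))"
    using deg_pos k by (cases k) (simp_all add: sum.distrib)
  finally show ?thesis by simp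
qed

lemma orbit_coord:
  assumes "k < d"
  shows "(F ^^ (l + k + 1)) e x $ k =
    - (\<Sum>m\<le>k. wconv (\<beta> m) (int K) (\<lambda>z. (F ^^ (l + m)) e z $ (d - 1)) x)"
  using assms by (induct k) (simp_all add: lca_companion_index)

lemma orbit_last_coord_solves_rec: "solves_rec \<beta> d (int K) (\<lambda>l z. (F ^^ l) e z $ (d - 1))"
  unfolding solves_rec_def
proof (intro allI)
  fix l x
  let ?Y = "\<lambda>l z. (F ^^ l) e z $ (d - 1)"
  have "{..d} = insert d {..d - 1}" using deg_pos by auto
  then have "(\<Sum>m\<le>d. wconv (\<beta> m) (int K) (?Y (l + m)) x) =
      ?Y (l + d) x + (\<Sum>m\<le>d - 1. wconv (\<beta> m) (int K) (?Y (l + m)) x)"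
    using deg_pos monic by (simp add: wconv_fls_1)
  also have "\<dots> = 0"
    using orbit_coord[of "d - 1" l e x] deg_pos by simp
  finally show "(\<Sum>m\<le>d. wconv (\<beta> m) (int K) (?Y (l + m)) x) = 0" .
qed

lemma orbit_vanishes_if_last_coord_vanishes:
  assumes last: "\<forall>l z. (F ^^ l) e z $ (d - 1) = 0"
  shows "k < d \<Longrightarrow> (F ^^ l) e x $ k = 0"
proof (induct "d - 1 - k" arbitrary: k l)
  case 0
  then have "k = d - 1" by simp
  then show ?case using last by simp
next
  case (Suc n)
  then have "Suc k < d" "n = d - 1 - Suc k" by auto
  then have "(F ^^ Suc l) e x $ Suc k = 0" using Suc.hyps by blast
  moreover have "wconv (\<beta> (Suc k)) (int K) (\<lambda>z. (F ^^ l) e z $ (d - 1)) x = 0"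
    unfolding wconv_def using last by simp
  ultimately show ?case using lca_companion_index[OF \<open>Suc k < d\<close>] by simp
qed

text \<open>The configuration whose orbit has last coordinate \<open>y\<close>, obtained by inverting
  \<open>orbit_coord\<close>.\<close>

definition solution_config :: "(nat \<Rightarrow> int \<Rightarrow> 'a) \<Rightarrow> nat \<Rightarrow> int \<Rightarrow> 'a vec" where
  "solution_config y l x = vec d (\<lambda>k. \<Sum>m\<in>{k+1..d}. wconv (\<beta> m) (int K) (y (l + m - k - 1)) x)"

lemma solution_config_last: "solution_config y l x $ (d - 1) = y l x"
proof -
  have "{d - 1 + 1..d} = {d}" using deg_pos by auto
  then show ?thesis
    unfolding solution_config_def using deg_pos monic by (simp add: wconv_fls_1)
qed

lemma lca_solution_config:
  assumes rec: "solves_rec \<beta> d (int K) y"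
  shows "F (solution_config y l) = solution_config y (Suc l)"
proof (intro ext eq_vecI)
  fix x k
  assume "k < dim_vec (solution_config y (Suc l) x)"
  then have k: "k < d" by (simp add: solution_config_def)
  have shift: "wconv (\<beta> k) (int K) (\<lambda>z. solution_config y l z $ (d - 1)) x = wconv (\<beta> k) (int K) (y l) x"
    unfolding solution_config_last ..
  show "F (solution_config y l) x $ k = solution_config y (Suc l) x $ k"
  proof (cases "k = 0")
    case True
    have "{..d} = insert 0 {1..d}" by auto
    then have "(\<Sum>m\<le>d. wconv (\<beta> m) (int K) (y (l + m)) x) =
        wconv (\<beta> 0) (int K) (y l) x + (\<Sum>m\<in>{1..d}. wconv (\<beta> m) (int K) (y (l + m)) x)"
      by simp
    moreover have "(\<Sum>m\<le>d. wconv (\<beta> m) (int K) (y (l + m)) x) = 0"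
      using rec unfolding solves_rec_def by blast
    ultimately have "wconv (\<beta> 0) (int K) (y l) x + (\<Sum>m\<in>{1..d}. wconv (\<beta> m) (int K) (y (l + m)) x) = 0"
      by simp
    then show ?thesis
      using k True shift by (simp add: lca_companion_index solution_config_def neg_eq_iff_add_eq_0)
  next
    case False
    have "{k..d} = insert k {k + 1..d}" using k by auto
    then show ?thesis
      using k False shift by (simp add: lca_companion_index solution_config_def)
  qed
qed (simp add: solution_config_def)

lemma invisible_solution_config:
  assumes rec: "solves_rec \<beta> d (int K) y" and window: "\<forall>l z. \<bar>z\<bar> \<le> int R + int K \<longrightarrow> y l z = 0"
    and nonzero: "y 0 c \<noteq> 0"
  shows "invisible_config d (companion_mat \<pi>) R (solution_config y 0)"
proof -
  have orbit: "(F ^^ l) (solution_config y 0) = solution_config y l" for l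
    by (induct l) (simp_all add: lca_solution_config[OF rec])
  have "solution_config y l x = 0\<^sub>v d" if "\<bar>x\<bar> \<le> int R" for l x
    unfolding solution_config_def using that window by (intro eq_vecI) (auto simp: wconv_def intro!: sum.neutral)
  moreover have "solution_config y 0 \<noteq> zero_config d"
    using nonzero solution_config_last[of y 0 c] deg_pos unfolding zero_config_def by auto
  ultimately show ?thesis
    unfolding invisible_config_def orbit by (simp add: solution_config_def)
qed

lemma is_init_exp_pi: "\<sigma> = 1 \<or> \<sigma> = -1 \<Longrightarrow> is_init_exp \<sigma> \<pi> (init_exp \<sigma> \<pi>)"
  using is_init_exp_init_exp[OF lp] monic by fastforce

lemma coeff_above_init_exp: "\<sigma> = 1 \<or> \<sigma> = -1 \<Longrightarrow> init_exp \<sigma> \<pi> < n \<Longrightarrow> \<beta> m (\<sigma> * n) = 0"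
  using is_init_exp_pi unfolding is_init_exp_def by blast

lemma init_exp_attained: "\<sigma> = 1 \<or> \<sigma> = -1 \<Longrightarrow> \<exists>m\<le>d. \<beta> m (\<sigma> * init_exp \<sigma> \<pi>) \<noteq> 0"
  using is_init_exp_pi unfolding is_init_exp_def by (metis coeff_eq_0 fls_zero_nth not_le_imp_less)

lemma abs_init_exp_le: "\<sigma> = 1 \<or> \<sigma> = -1 \<Longrightarrow> \<bar>init_exp \<sigma> \<pi>\<bar> \<le> int K"
proof -
  assume \<sigma>: "\<sigma> = 1 \<or> \<sigma> = -1"
  obtain m where "\<beta> m (\<sigma> * init_exp \<sigma> \<pi>) \<noteq> 0" using init_exp_attained[OF \<sigma>] by blast
  then have "\<not> int K < \<bar>\<sigma> * init_exp \<sigma> \<pi>\<bar>"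
    using bounded unfolding tpoly_bounded_def lpoly_bounded_def by blast
  then show ?thesis using \<sigma> by auto
qed

lemma orbit_last_coord_vanishes_dir:
  assumes \<sigma>: "\<sigma> = 1 \<or> \<sigma> = -1" and exp: "expansive_dir \<sigma> \<pi>"
    and window: "\<forall>l z. \<bar>z\<bar> \<le> int K \<longrightarrow> (F ^^ l) e z $ (d - 1) = 0"
  shows "\<forall>l z. z \<le> int K \<longrightarrow> (F ^^ l) e (\<sigma> * z) $ (d - 1) = 0"
proof -
  let ?A = "init_exp \<sigma> \<pi>"
  have only_0: "\<forall>m\<in>{1..d}. \<beta> m (\<sigma> * ?A) = 0"
    using expansive_dir_iff_init_exp[OF lp monic deg_pos \<sigma>] exp by blast
  obtain m where m: "m \<le> d" "\<beta> m (\<sigma> * ?A) \<noteq> 0" using init_exp_attained[OF \<sigma>] by blast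
  with only_0 have "m = 0" by (cases m) auto
  with m have b0: "\<beta> 0 (\<sigma> * ?A) \<noteq> 0" by simp
  show ?thesis
  proof (rule solves_rec_vanish_dir[OF \<sigma> orbit_last_coord_solves_rec abs_init_exp_le[OF \<sigma>] b0])
    show "\<forall>j>?A. \<beta> 0 (\<sigma> * j) = 0" using coeff_above_init_exp[OF \<sigma>] by blast
    show "\<forall>m\<in>{1..d}. \<forall>j\<ge>?A. \<beta> m (\<sigma> * j) = 0"
    proof (intro ballI allI impI)
      fix m j assume "m \<in> {1..d}" "?A \<le> j"
      then show "\<beta> m (\<sigma> * j) = 0" using coeff_above_init_exp[OF \<sigma>] only_0 by (cases "j = ?A") auto
    qed
    show "\<forall>l z. int K - 2 * int K \<le> z \<and> z \<le> int K \<longrightarrow> (F ^^ l) e (\<sigma> * z) $ (d - 1) = 0"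
      using window \<sigma> by auto
  qed
qed

lemma pos_expansive_if_expansive_dirs:
  assumes "expansive_dir 1 \<pi>" "expansive_dir (-1) \<pi>"
  shows "pos_expansive_lca d (companion_mat \<pi>)"
  unfolding pos_expansive_lca_iff_invisible
proof (intro exI notI)
  assume "\<exists>e. invisible_config d (companion_mat \<pi>) K e"
  then obtain e where e: "\<forall>i. e i \<in> carrier_vec d" "e \<noteq> zero_config d"
    and window: "\<forall>l j. \<bar>j\<bar> \<le> int K \<longrightarrow> (F ^^ l) e j = 0\<^sub>v d"
    unfolding invisible_config_def by blast
  have "\<forall>l z. \<bar>z\<bar> \<le> int K \<longrightarrow> (F ^^ l) e z $ (d - 1) = 0" using window deg_pos by simp
  note vanish = orbit_last_coord_vanishes_dir[OF _ _ this]
  have "(F ^^ l) e z $ (d - 1) = 0" for l z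
  proof (cases "z \<le> int K")
    case True then show ?thesis using vanish[of 1] assms(1) by simp
  next
    case False
    have "\<forall>l z. z \<le> int K \<longrightarrow> (F ^^ l) e (-1 * z) $ (d - 1) = 0"
      by (rule vanish) (use assms(2) in simp_all)
    from this[rule_format, of "-z" l] False show ?thesis by simp
  qed
  then have "e x $ k = 0" if "k < d" for x k
    using orbit_vanishes_if_last_coord_vanishes[of e k 0 x] that by simp
  then have "e = zero_config d"
    using e(1) unfolding zero_config_def by (intro ext eq_vecI) auto
  with e(2) show False ..
qed

lemma invisible_config_if_not_expansive_dir:
  assumes \<sigma>: "\<sigma> = 1 \<or> \<sigma> = -1" and not_exp: "\<not> expansive_dir \<sigma> \<pi>"
  obtains e where "invisible_config d (companion_mat \<pi>) R e"
proof -
  let ?A = "init_exp \<sigma> \<pi>"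
  let ?P = "\<lambda>m. m \<in> {1..d} \<and> \<beta> m (\<sigma> * ?A) \<noteq> 0"
  have "\<exists>m. ?P m" using expansive_dir_iff_init_exp[OF lp monic deg_pos \<sigma>] not_exp by blast
  then obtain m1 where m1: "?P m1" and m1_max: "\<And>m. ?P m \<Longrightarrow> m \<le> m1"
    using ex_has_greatest_nat[of ?P _ id "Suc d"] by auto
  have top: "\<forall>m\<le>d. \<forall>j>?A. \<beta> m (\<sigma> * j) = 0" using coeff_above_init_exp[OF \<sigma>] by blast
  have above_m1: "\<forall>m. m1 < m \<and> m \<le> d \<longrightarrow> \<beta> m (\<sigma> * ?A) = 0"
    using m1 m1_max by (meson atLeastAtMost_iff le_trans less_imp_le_nat not_le)
  obtain y where y: "solves_rec \<beta> d (int K) y" "y 0 (\<sigma> * (- int R - int K - 1)) \<noteq> 0"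
    "\<forall>l x. - int R - int K - 1 < x \<longrightarrow> y l (\<sigma> * x) = 0"
    by (rule exists_rec_solution_dir[OF \<sigma> abs_init_exp_le[OF \<sigma>] top _ _ _ above_m1]) (use m1 in auto)
  have "y l z = 0" if "\<bar>z\<bar> \<le> int R + int K" for l z
    using y(3)[rule_format, of "\<sigma> * z" l] that \<sigma> by auto
  then show thesis using invisible_solution_config[OF y(1) _ y(2)] that by blast
qed

theorem pos_expansive_companion_iff:
  "pos_expansive_lca d (companion_mat \<pi>) \<longleftrightarrow> expansive_dir 1 \<pi> \<and> expansive_dir (-1) \<pi>"
proof
  have "\<not> pos_expansive_lca d (companion_mat \<pi>)" if "\<sigma> = 1 \<or> \<sigma> = -1" "\<not> expansive_dir \<sigma> \<pi>" for \<sigma>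
    using invisible_config_if_not_expansive_dir[OF that] unfolding pos_expansive_lca_iff_invisible
    by blast
  then show "pos_expansive_lca d (companion_mat \<pi>) \<Longrightarrow> expansive_dir 1 \<pi> \<and> expansive_dir (-1) \<pi>"
    by auto
qed (blast intro: pos_expansive_if_expansive_dirs)

end

lemma pos_expansive_lca_diag_block_companion:
  fixes \<pi>s :: "'a::field fls poly list"
  assumes \<pi>s: "\<forall>\<pi>\<in>set \<pi>s. is_lp_tpoly \<pi> \<and> lead_coeff \<pi> = 1 \<and> 0 < degree \<pi>"
  shows "pos_expansive_lca (sum_list (map degree \<pi>s)) (diag_block_mat (map companion_mat \<pi>s)) \<longleftrightarrow>
    (\<forall>\<pi>\<in>set \<pi>s. expansive_dir 1 \<pi> \<and> expansive_dir (-1) \<pi>)"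
proof -
  have "pos_expansive_lca (degree \<pi>) (companion_mat \<pi>) \<longleftrightarrow> expansive_dir 1 \<pi> \<and> expansive_dir (-1) \<pi>"
    if "\<pi> \<in> set \<pi>s" for \<pi>
  proof -
    have \<pi>: "is_lp_tpoly \<pi>" "lead_coeff \<pi> = 1" "0 < degree \<pi>" using \<pi>s that by auto
    obtain K where K: "tpoly_bounded \<pi> K" using is_lp_tpoly_bounded[OF \<pi>(1)] .
    interpret companion_lca \<pi> K using \<pi> K by unfold_locales
    show ?thesis by (rule pos_expansive_companion_iff)
  qed
  then show ?thesis using pos_expansive_lca_diag_block_mat[of "map companion_mat \<pi>s"] by (simp add: comp_def)
qed

theorem lemma12:
  fixes C :: "'p::prime_card mod_ring fls mat" and n :: nat
  assumes "n > 1"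
    and "C \<in> carrier_mat n n"
    and "rational_canonical_form C"
  shows "pos_expansive_lca n C \<longleftrightarrow> expansive_mat C"
proof -
  obtain \<pi>s where \<pi>s: "\<forall>\<pi>\<in>set \<pi>s. is_lp_tpoly \<pi> \<and> lead_coeff \<pi> = 1 \<and> degree \<pi> > 0"
    and C: "C = diag_block_mat (map companion_mat \<pi>s)"
    using assms(3) unfolding rational_canonical_form_def by blast
  have n: "n = sum_list (map degree \<pi>s)"
    using carrier_matD(1)[OF assms(2)] unfolding C by (simp add: dim_diag_block_mat comp_def)
  with assms(1) have "\<pi>s \<noteq> []" by auto
  have monic: "\<forall>\<pi>\<in>set \<pi>s. lead_coeff \<pi> = 1" using \<pi>s by simp
  have "expansive_mat C \<longleftrightarrow> (\<forall>\<pi>\<in>set \<pi>s. expansive_dir 1 \<pi> \<and> expansive_dir (-1) \<pi>)"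
    unfolding expansive_mat_def C char_poly_diag_block_companion[OF monic]
    by (rule expansive_poly_prod_list_iff) (use \<pi>s \<open>\<pi>s \<noteq> []\<close> in auto)
  moreover have "pos_expansive_lca n C \<longleftrightarrow> (\<forall>\<pi>\<in>set \<pi>s. expansive_dir 1 \<pi> \<and> expansive_dir (-1) \<pi>)"
    unfolding n C by (rule pos_expansive_lca_diag_block_companion[OF \<pi>s])
  ultimately show ?thesis by simp
qed

end
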